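(* Let $p$ be an odd prime, $m$ a positive even integer, $s=m/2$, $q=p^m$, $u$ a positive integer and $v=\gcd(m,u)$. Let $\mathrm{Tr}$ denote the trace map from $\mathbb{F}_q$ to $\mathbb{F}_p$. Let \[ D_1=\{(x,y)\in\mathbb{F}_q^2\setminus\{(0,0)\} : \mathrm{Tr}(x+y^{p^u+1})=0\}, \] and $C_{D_1}=\{c(a,b)=(\mathrm{Tr}(ax+by))_{(x,y)\in D_1} : a,b\in\mathbb{F}_q\}$. If $\frac{m}{v}\equiv 2\pmod 4$, then $C_{D_1}$ is a $[p^{2m-1}-1,2m]$ three-weight linear code over $\mathbb{F}_p$ whose weight distribution is: weight $0$ with multiplicity $1$; weight $(p-1)p^{2m-2}$ with multiplicity $p^{2m}-1-(p-1)p^m$; weight $(p-1)p^{2m-2}\left(1+\frac{1}{p^s}\right)$ with multiplicity $(p-1)(p^{m-1}-p^s+p^{s-1})$; and weight $(p-1)p^{2m-2}\left(1-\frac{1}{(p-1)p^s}\right)$ with multiplicity $(p-1)(p^s+1)(p^s-p^{s-1})$.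
   Context: An $[n,k]$ linear code over $\mathbb{F}_p$ is a $k$-dimensional subspace of $\mathbb{F}_p^n$. The multiplicity of a weight $w$ is the number of codewords of Hamming weight $w$; a code is $t$-weight if exactly $t$ nonzero weights occur. *)

theory Defs
  imports Complex_Main "HOL-Computational_Algebra.Primes"
begin

text \<open>Finite field F_q is modelled as a finite field type 'a with CARD('a) = p^m, p prime.
  Trace F_q -> F_p: Tr x = sum_{i<m} x^(p^i) (values lie in the prime subfield).\<close>
definition tr :: "nat \<Rightarrow> nat \<Rightarrow> 'a::field \<Rightarrow> 'a" where
  "tr p m x = (\<Sum>i<m. x ^ (p ^ i))"

definition D1 :: "nat \<Rightarrow> nat \<Rightarrow> nat \<Rightarrow> ('a::{finite,field} \<times> 'a) set" where
  "D1 p m u = {(x, y). (x, y) \<noteq> (0, 0) \<and> tr p m (x + y ^ (p ^ u + 1)) = 0}"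

text \<open>Codeword c(a,b), as a vector indexed by D1 (zero outside D1).\<close>
definition cw :: "nat \<Rightarrow> nat \<Rightarrow> nat \<Rightarrow> 'a::{finite,field} \<Rightarrow> 'a \<Rightarrow> ('a \<times> 'a \<Rightarrow> 'a)" where
  "cw p m u a b = (\<lambda>(x, y). if (x, y) \<in> D1 p m u then tr p m (a * x + b * y) else 0)"

definition code :: "nat \<Rightarrow> nat \<Rightarrow> nat \<Rightarrow> ('a::{finite,field} \<times> 'a \<Rightarrow> 'a) set" where
  "code p m u = {cw p m u a b | a b. True}"

definition hw :: "nat \<Rightarrow> nat \<Rightarrow> nat \<Rightarrow> ('a::{finite,field} \<times> 'a \<Rightarrow> 'a) \<Rightarrow> nat" where
  "hw p m u c = card {d \<in> D1 p m u. c d \<noteq> 0}"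

end

theory Submission
  imports Defs "HOL-Computational_Algebra.Polynomial" "HOL-Number_Theory.Cong"
begin

(* The weight of c(a,b) is p^(2m-1) - N(a,b), where N(a,b) counts the (x,y) with
   Tr(x + y^(p^u+1)) = 0 = Tr(a x + b y). Solving for x gives N(a,b) = p^(2m-2) unless a is a
   nonzero element of F_p. In that case write b = L_a(w), where L_a is the polar map of the
   quadratic form Q_a(y) = Tr(a y^(p^u+1)) over F_p; L_a is bijective because m/gcd(m,u) = 2 mod 4.
   Completing the square, N(a,b) = p^(m-1) #{y. Q_a(y) = Q_a(w)}.  Every t in F_p^* is a
   (p^u+1)-th power, so Q_a takes all nonzero values equally often, and the first two moments of
   the value counts determine them up to one sign.  The sign is fixed by a divisibility argument:
   the (p^v+1)-th roots of unity act freely on the fibre Q_a = 1. *)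

lemma card_pairs_eq_sum_snd:
  fixes P :: "'a::finite \<Rightarrow> 'b::finite \<Rightarrow> bool"
  shows "card {(x, y). P x y} = (\<Sum>y\<in>UNIV. card {x. P x y})"
proof -
  have "{(x, y). P x y} = (\<Union>y. {x. P x y} \<times> {y})" by auto
  then have "card {(x, y). P x y} = (\<Sum>y\<in>UNIV. card ({x. P x y} \<times> {y}))"
    by (simp add: card_UN_disjoint disjoint_iff)
  then show ?thesis by (simp add: card_cartesian_product)
qed

lemma sum_comp_eq_sum_card_fiber:
  fixes F :: "'a::finite \<Rightarrow> 'b" and g :: "'b \<Rightarrow> nat"
  assumes "finite T" and "\<And>y. F y \<in> T"
  shows "(\<Sum>y\<in>UNIV. g (F y)) = (\<Sum>t\<in>T. card {y. F y = t} * g t)"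
proof -
  have "(\<Sum>y\<in>UNIV. g (F y)) = (\<Sum>t\<in>T. \<Sum>y\<in>{y \<in> UNIV. F y = t}. g (F y))"
    by (rule sum.group[symmetric]) (use assms in auto)
  also have "\<dots> = (\<Sum>t\<in>T. card {y. F y = t} * g t)" by simp
  finally show ?thesis .
qed

lemma card_dvd_card_if_free_action:
  fixes act :: "'g \<Rightarrow> 'a \<Rightarrow> 'a"
  assumes "finite S"
    and closed: "\<And>g x. g \<in> G \<Longrightarrow> x \<in> S \<Longrightarrow> act g x \<in> S"
    and free: "\<And>x. x \<in> S \<Longrightarrow> inj_on (\<lambda>g. act g x) G"
    and orbit_act: "\<And>g x. g \<in> G \<Longrightarrow> x \<in> S \<Longrightarrow>
      (\<lambda>h. act h (act g x)) ` G = (\<lambda>h. act h x) ` G"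
    and in_orbit: "\<And>x. x \<in> S \<Longrightarrow> x \<in> (\<lambda>h. act h x) ` G"
  shows "card G dvd card S"
proof -
  define orbit where "orbit x = (\<lambda>h. act h x) ` G" for x
  have orbits_cover: "\<Union>(orbit ` S) = S"
    using closed in_orbit by (auto simp: orbit_def)
  have "card G * card (orbit ` S) = card (\<Union>(orbit ` S))"
  proof (rule card_partition)
    show "card c = card G" if "c \<in> orbit ` S" for c
      using that free by (auto simp: orbit_def card_image)
    show "c1 \<inter> c2 = {}" if c: "c1 \<in> orbit ` S" "c2 \<in> orbit ` S" "c1 \<noteq> c2" for c1 c2
    proof (rule ccontr)
      assume "c1 \<inter> c2 \<noteq> {}"
      then obtain x y g h where "x \<in> S" "y \<in> S" "c1 = orbit x" "c2 = orbit y"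
          "g \<in> G" "h \<in> G" "act g x = act h y"
        using c(1,2) by (auto simp: orbit_def)
      then have "c1 = c2" using orbit_act unfolding orbit_def by metis
      with c(3) show False by contradiction
    qed
  qed (use \<open>finite S\<close> orbits_cover in auto)
  then show ?thesis using orbits_cover by (metis dvd_triv_left)
qed

section \<open>Divisibility\<close>

lemma power_minus_one_dvd_power_mult_minus_one:
  fixes x :: nat
  shows "x ^ a - 1 dvd x ^ (a * c) - 1"
proof (cases "x = 0")
  case False
  have "int (x ^ a) - 1 dvd int (x ^ a) ^ c - 1 ^ c"
    using power_diff_sumr2[of "int (x ^ a)" c 1] by (metis dvd_triv_left)
  then have "int (x ^ a - 1) dvd int (x ^ (a * c) - 1)"
    using False by (simp add: of_nat_diff power_mult)
  then show ?thesis by (simp only: of_nat_dvd_iff)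
qed (simp add: power_0_left)

lemma odd_power_plus_one_dvd:
  fixes x :: nat
  assumes "odd k"
  shows "x + 1 dvd x ^ k + 1"
proof -
  have "int x - (-1) dvd int x ^ k - (-1) ^ k"
    using power_diff_sumr2[of "int x" k "-1"] by (metis dvd_triv_left)
  then have "int (x + 1) dvd int (x ^ k + 1)" using assms by (simp add: add.commute)
  then show ?thesis by (simp only: of_nat_dvd_iff)
qed

lemma gcd_structure_if_quotient_mod_4_eq_2:
  fixes m u :: nat
  assumes "(m div gcd m u) mod 4 = 2"
  shows "\<exists>k. odd k \<and> m = 2 * gcd m u * k"
    and "odd (u div gcd m u)"
    and "gcd (4 * u) m = 2 * gcd m u"
proof -
  let ?v = "gcd m u"
  have "?v > 0" using assms by (cases "m = 0 \<and> u = 0") auto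
  then obtain m' u' where mu: "m = m' * ?v" "u = u' * ?v" "coprime m' u'"
    using gcd_coprime_exists[of m u] by auto
  have "m div ?v = m'" using mu(1) \<open>?v > 0\<close> by (metis div_mult_self_is_m)
  then have "m' mod 4 = 2" using assms by simp
  define k where "k = m' div 2"
  have k: "m' = 2 * k" "odd k" using \<open>m' mod 4 = 2\<close> unfolding k_def by presburger+
  show "\<exists>k. odd k \<and> m = 2 * ?v * k" using k mu(1) by (intro exI[of _ k]) (simp add: ac_simps)
  have "odd u'" using mu(3) k(1) by auto
  then show "odd (u div ?v)" using mu(2) \<open>?v > 0\<close> by (metis div_mult_self_is_m)
  have "coprime (2 * u') k" using mu(3) k by (simp add: coprime_commute)
  then have "gcd ((2 * ?v) * (2 * u')) ((2 * ?v) * k) = 2 * ?v"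
    by (simp only: gcd_mult_distrib_nat[symmetric] coprime_iff_gcd_eq_1)
  moreover have "4 * u = (2 * ?v) * (2 * u')" "m = (2 * ?v) * k" using mu(1,2) k(1) by (simp_all add: algebra_simps)
  ultimately show "gcd (4 * u) m = 2 * ?v" by (simp only:)
qed

section \<open>Finite fields\<close>

lemma range_of_int_eq_of_nat_lessThan_CHAR:
  assumes "CHAR('a::ring_1) > 0"
  shows "range (of_int :: int \<Rightarrow> 'a) = of_nat ` {..<CHAR('a)}"
proof (intro equalityI subsetI)
  fix z :: 'a assume "z \<in> range of_int"
  then obtain k where "z = of_int k" by blast
  also have "\<dots> = of_int (k mod int CHAR('a))"
    by (simp add: of_int_eq_iff_cong_CHAR cong_def)
  also have "\<dots> = of_nat (nat (k mod int CHAR('a)))"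
    using assms by simp
  finally show "z \<in> of_nat ` {..<CHAR('a)}"
    using assms by (intro image_eqI[where x = "nat (k mod int CHAR('a))"]) (auto simp: nat_less_iff)
next
  fix z :: 'a assume "z \<in> of_nat ` {..<CHAR('a)}"
  then obtain i where "z = of_int (int i)" by auto
  then show "z \<in> range of_int" by blast
qed

lemma card_of_nat_lessThan_CHAR: "card (of_nat ` {..<CHAR('a)} :: 'a::semiring_1_cancel set) = CHAR('a)"
proof -
  have "inj_on (of_nat :: nat \<Rightarrow> 'a) {..<CHAR('a)}"
    by (auto intro!: inj_onI simp: of_nat_eq_iff_cong_CHAR cong_less_modulus_unique_nat)
  then show ?thesis by (simp add: card_image)
qed

lemma card_range_of_int_dvd_card:
  "card (range (of_int :: int \<Rightarrow> 'a::{finite,ring_1})) dvd card (UNIV :: 'a set)"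
proof (rule card_dvd_card_if_free_action[where act = "(+)"])
  let ?P = "range (of_int :: int \<Rightarrow> 'a)"
  show "(\<lambda>h. h + (g + x)) ` ?P = (\<lambda>h. h + x) ` ?P" if "g \<in> ?P" for g x
  proof -
    have "(\<lambda>h. h + g) ` ?P = ?P"
    proof
      show "(\<lambda>h. h + g) ` ?P \<subseteq> ?P" using that by (auto simp flip: of_int_add)
      show "?P \<subseteq> (\<lambda>h. h + g) ` ?P"
      proof
        fix z assume "z \<in> ?P"
        then have "z - g \<in> ?P" using that by (auto simp flip: of_int_diff)
        then show "z \<in> (\<lambda>h. h + g) ` ?P" by (rule rev_image_eqI) simp
      qed
    qed
    moreover have "(\<lambda>h. h + (g + x)) ` ?P = (\<lambda>h. h + x) ` ((\<lambda>h. h + g) ` ?P)"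
      by (simp add: image_image add.assoc)
    ultimately show ?thesis by simp
  qed
  show "x \<in> (\<lambda>h. h + x) ` ?P" for x :: 'a
    using rangeI[of "of_int :: int \<Rightarrow> 'a" 0] by (intro image_eqI[where x = 0]) simp_all
qed (auto intro: inj_onI)

lemma CHAR_eq_of_card_eq_prime_power:
  assumes "prime p" and "card (UNIV :: 'a::{finite,field} set) = p ^ m"
  shows "CHAR('a) = p"
proof -
  have CHAR_pos: "CHAR('a) > 0" by (rule finite_imp_CHAR_pos) simp
  then have "CHAR('a) dvd p ^ m"
    using card_range_of_int_dvd_card[where 'a = 'a] assms(2)
      range_of_int_eq_of_nat_lessThan_CHAR[where 'a = 'a] card_of_nat_lessThan_CHAR[where 'a = 'a]
    by simp
  moreover have "prime CHAR('a)" using prime_CHAR_semidom[OF CHAR_pos] .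
  ultimately show ?thesis using assms(1) by (metis prime_dvd_power primes_dvd_imp_eq)
qed

lemma finite_field_power_card_minus_one:
  fixes x :: "'a::{finite,field}"
  assumes "x \<noteq> 0"
  shows "x ^ (card (UNIV :: 'a set) - 1) = 1"
proof -
  let ?U = "UNIV - {0 :: 'a}"
  have "(\<Prod>y\<in>?U. x * y) = (\<Prod>y\<in>?U. y)"
    by (rule prod.reindex_bij_witness[of _ "\<lambda>y. y / x" "\<lambda>y. x * y"]) (use assms in auto)
  moreover have "(\<Prod>y\<in>?U. x * y) = x ^ card ?U * (\<Prod>y\<in>?U. y)"
    by (simp add: prod.distrib)
  moreover have "(\<Prod>y\<in>?U. y) \<noteq> 0" by simp
  ultimately have "x ^ card ?U = 1" by simp
  then show ?thesis by (metis card_Diff_singleton UNIV_I)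
qed

lemma finite_field_power_card:
  fixes x :: "'a::{finite,field}"
  shows "x ^ card (UNIV :: 'a set) = x"
proof -
  have card_pos: "card (UNIV :: 'a set) = Suc (card (UNIV :: 'a set) - 1)"
    using finite_UNIV_card_ge_0[where 'a = 'a] by simp
  show ?thesis
  proof (cases "x = 0")
    case False
    have "x ^ card (UNIV :: 'a set) = x * x ^ (card (UNIV :: 'a set) - 1)"
      by (metis card_pos power_Suc)
    then show ?thesis using finite_field_power_card_minus_one[OF False] by simp
  qed (use card_pos in \<open>simp add: power_0_left\<close>)
qed

lemma card_power_eq_le:
  fixes z :: "'a::idom"
  assumes "n > 0"
  shows "card {x. x ^ n = z} \<le> n"
proof -
  define P :: "'a poly" where "P = monom 1 n + [:- z:]"
  have "degree P = n"
    using assms by (simp add: P_def degree_add_eq_left degree_monom_eq)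
  moreover then have "P \<noteq> 0" using assms by auto
  moreover have "{x. poly P x = 0} = {x. x ^ n = z}" by (simp add: P_def poly_monom)
  ultimately show ?thesis using card_poly_roots_bound by metis
qed

lemma card_nonzero_non_roots_of_unity_le:
  assumes "n > 0" and k: "card (UNIV :: 'a::{finite,field} set) - 1 = n * k"
  shows "card {x::'a. x \<noteq> 0 \<and> x ^ n \<noteq> 1} \<le> n * (k - 1)"
proof -
  (* such an x is a root of (X^(n k) - 1) / (X^n - 1) *)
  define h :: "'a poly" where "h = (\<Sum>j<k. monom 1 (n * j))"
  have "k > 0" using k card_mono[of UNIV "{0::'a, 1}"] by (cases k) auto
  then have "coeff h 0 = 1" using \<open>n > 0\<close> by (simp add: h_def coeff_sum coeff_monom)
  then have "h \<noteq> 0" by auto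
  moreover have "degree h \<le> n * (k - 1)"
    unfolding h_def by (rule degree_sum_le) (auto simp: degree_monom_eq)
  ultimately have "card {x. poly h x = 0} \<le> n * (k - 1)"
    using card_poly_roots_bound by (metis order_trans)
  moreover have "{x::'a. x \<noteq> 0 \<and> x ^ n \<noteq> 1} \<subseteq> {x. poly h x = 0}"
  proof
    fix x :: 'a assume x: "x \<in> {x. x \<noteq> 0 \<and> x ^ n \<noteq> 1}"
    then have "(x ^ n) ^ k = 1"
      using finite_field_power_card_minus_one[of x] k by (simp add: power_mult)
    then show "x \<in> {x. poly h x = 0}"
      using x by (simp add: h_def poly_sum poly_monom power_mult sum_gp_strict)
  qed
  ultimately show ?thesis by (meson card_mono finite order_trans)
qed

lemma card_roots_of_unity_finite_field:
  assumes n: "n > 0" and dvd: "n dvd card (UNIV :: 'a::{finite,field} set) - 1"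
  shows "card {x::'a. x ^ n = 1} = n"
proof -
  obtain k where k: "card (UNIV :: 'a set) - 1 = n * k" using dvd by blast
  have "k > 0" using k card_mono[of UNIV "{0::'a, 1}"] by (cases k) auto
  have "card {x::'a. x ^ n = 1} + card {x::'a. x \<noteq> 0 \<and> x ^ n \<noteq> 1} = n * k"
  proof -
    have "UNIV - {0} = {x::'a. x ^ n = 1} \<union> {x. x \<noteq> 0 \<and> x ^ n \<noteq> 1}"
      using n by (auto simp: power_0_left)
    moreover have "card (UNIV - {0 :: 'a}) = n * k" using k by (simp add: card_Diff_singleton)
    moreover have "card ({x::'a. x ^ n = 1} \<union> {x. x \<noteq> 0 \<and> x ^ n \<noteq> 1})
        = card {x::'a. x ^ n = 1} + card {x::'a. x \<noteq> 0 \<and> x ^ n \<noteq> 1}"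
      by (rule card_Un_disjoint) auto
    ultimately show ?thesis by simp
  qed
  moreover have "n * k = n * (k - 1) + n" using \<open>k > 0\<close> by (cases k) auto
  ultimately show ?thesis
    using card_nonzero_non_roots_of_unity_le[OF n k] card_power_eq_le[OF n, where z = "1 :: 'a"]
    by linarith
qed

lemma power_image_roots_of_unity:
  assumes k: "k > 0" and n: "n > 0" and dvd: "k * n dvd card (UNIV :: 'a::{finite,field} set) - 1"
  shows "(\<lambda>x::'a. x ^ n) ` {x. x ^ (k * n) = 1} = {x. x ^ k = 1}"
proof (rule card_seteq)
  let ?A = "{x::'a. x ^ (k * n) = 1}"
  show "(\<lambda>x. x ^ n) ` ?A \<subseteq> {x. x ^ k = 1}"
    by (auto simp flip: power_mult simp: mult.commute)
  have "k * n = card ?A"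
    using card_roots_of_unity_finite_field[OF _ dvd] k n by simp
  also have "\<dots> \<le> card (\<Union>z\<in>(\<lambda>x. x ^ n) ` ?A. {x. x ^ n = z})"
    by (intro card_mono) auto
  also have "\<dots> \<le> (\<Sum>z\<in>(\<lambda>x. x ^ n) ` ?A. card {x::'a. x ^ n = z})"
    by (rule card_UN_le) simp
  also have "\<dots> \<le> (\<Sum>z\<in>(\<lambda>x. x ^ n) ` ?A. n)"
    by (intro sum_mono card_power_eq_le[OF n])
  also have "\<dots> = card ((\<lambda>x. x ^ n) ` ?A) * n" by simp
  finally have "k \<le> card ((\<lambda>x. x ^ n) ` ?A)" using n by simp
  then show "card {x::'a. x ^ k = 1} \<le> card ((\<lambda>x. x ^ n) ` ?A)"
    using card_power_eq_le[OF k, where z = "1 :: 'a"] by linarith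
qed simp

lemma card_roots_of_unity_dvd_card_if_mult_stable:
  fixes S :: "'a::field set"
  assumes "n > 0" and "finite S" and "0 \<notin> S"
    and stable: "\<And>g y. g ^ n = 1 \<Longrightarrow> y \<in> S \<Longrightarrow> g * y \<in> S"
  shows "card {g :: 'a. g ^ n = 1} dvd card S"
proof (rule card_dvd_card_if_free_action[where act = "(*)"])
  let ?G = "{g::'a. g ^ n = 1}"
  show "(\<lambda>h. h * (g * y)) ` ?G = (\<lambda>h. h * y) ` ?G" if g: "g \<in> ?G" for g y
  proof -
    have "(\<lambda>h. h * g) ` ?G = ?G"
    proof
      show "(\<lambda>h. h * g) ` ?G \<subseteq> ?G" using g by (auto simp: power_mult_distrib)
      show "?G \<subseteq> (\<lambda>h. h * g) ` ?G"
      proof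
        fix h assume "h \<in> ?G"
        moreover have "g \<noteq> 0" using g \<open>n > 0\<close> by (auto simp: power_0_left)
        ultimately have "h / g \<in> ?G" "h = h / g * g" using g by (auto simp: power_divide)
        then show "h \<in> (\<lambda>h. h * g) ` ?G" by blast
      qed
    qed
    moreover have "(\<lambda>h. h * (g * y)) ` ?G = (\<lambda>h. h * y) ` ((\<lambda>h. h * g) ` ?G)"
      by (simp add: image_image mult.assoc)
    ultimately show ?thesis by simp
  qed
  show "y \<in> (\<lambda>h. h * y) ` ?G" for y
    by (rule image_eqI[where x = 1]) simp_all
qed (use assms in \<open>auto intro: inj_onI\<close>)

section \<open>The field with \<open>p\<^sup>m\<close> elements and its trace\<close>

locale prime_power_field =
  fixes p m :: nat and field :: "'a::{finite,field} itself"
  assumes prime_p: "prime p" and card_field: "card (UNIV :: 'a set) = p ^ m" and m_pos: "m > 0"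
begin

lemma p_gt_1: "p > 1"
  using prime_p prime_gt_1_nat by blast

lemma p_power_m_eq: "p ^ m = p ^ (m - 1) * p"
  using m_pos by (metis Suc_diff_1 power_Suc2)

lemma CHAR_field: "CHAR('a) = p"
  using CHAR_eq_of_card_eq_prime_power[OF prime_p card_field] .

lemma frobenius_add: "((x::'a) + y) ^ (p ^ n) = x ^ (p ^ n) + y ^ (p ^ n)"
  using freshmans_dream'[of "p ^ n" n x y] CHAR_field prime_p by simp

lemma frobenius_minus: "(- (x::'a)) ^ (p ^ n) = - (x ^ (p ^ n))"
proof -
  have "x ^ (p ^ n) + (- x) ^ (p ^ n) = (x + - x) ^ (p ^ n)" by (rule frobenius_add[symmetric])
  also have "\<dots> = 0" using p_gt_1 by simp
  finally show ?thesis by (simp add: add_eq_0_iff)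
qed

lemma frobenius_diff: "((x::'a) - y) ^ (p ^ n) = x ^ (p ^ n) - y ^ (p ^ n)"
  using frobenius_add[of x "- y" n] frobenius_minus[of y n] by simp

lemma frobenius_sum: "(sum (f :: 'b \<Rightarrow> 'a) A) ^ (p ^ n) = (\<Sum>i\<in>A. f i ^ (p ^ n))"
  using p_gt_1 by (induction A rule: infinite_finite_induct) (auto simp: frobenius_add)

lemma power_p_power_add: "(x::'a) ^ (p ^ (a + b)) = (x ^ (p ^ a)) ^ (p ^ b)"
  by (simp add: power_add power_mult)

lemma power_q: "(x::'a) ^ (p ^ m) = x"
  using finite_field_power_card[of x] card_field by simp

lemma power_p_power_mult_if_fixed:
  assumes "(x::'a) ^ (p ^ a) = x"
  shows "x ^ (p ^ (a * k)) = x"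
proof (induction k)
  case (Suc k)
  have "x ^ (p ^ (a * Suc k)) = (x ^ (p ^ (a * k))) ^ (p ^ a)"
    by (metis add.commute mult_Suc_right power_p_power_add)
  then show ?case using Suc assms by simp
qed simp

lemma power_p_power_gcd_if_fixed:
  assumes "a \<noteq> 0" and "(x::'a) ^ (p ^ a) = x" and "x ^ (p ^ b) = x"
  shows "x ^ (p ^ gcd a b) = x"
proof -
  obtain i j where ij: "a * i = b * j + gcd a b" using bezout_nat[OF assms(1)] by blast
  have "x ^ (p ^ (b * j + gcd a b)) = x"
    using power_p_power_mult_if_fixed[OF assms(2)] ij by metis
  then show ?thesis
    using power_p_power_mult_if_fixed[OF assms(3), of j] by (simp add: power_p_power_add)
qed

definition Fp :: "'a set" where "Fp = {z. z ^ p = z}"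

lemma Fp_power_p_power: "z \<in> Fp \<Longrightarrow> z ^ (p ^ n) = z"
  by (induction n) (auto simp: Fp_def power_Suc2 power_mult)

lemma Fp_minus: "z \<in> Fp \<Longrightarrow> - z \<in> Fp"
  using frobenius_minus[of z 1] by (simp add: Fp_def)

lemma Fp_diff: "z \<in> Fp \<Longrightarrow> w \<in> Fp \<Longrightarrow> z - w \<in> Fp"
  using frobenius_diff[of z w 1] by (simp add: Fp_def)

lemma Fp_mult: "z \<in> Fp \<Longrightarrow> w \<in> Fp \<Longrightarrow> z * w \<in> Fp"
  by (simp add: Fp_def power_mult_distrib)

lemma Fp_divide: "z \<in> Fp \<Longrightarrow> w \<in> Fp \<Longrightarrow> z / w \<in> Fp"
  by (simp add: Fp_def power_divide)

lemma Fp_0 [simp]: "0 \<in> Fp" and Fp_1 [simp]: "1 \<in> Fp"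
  using p_gt_1 by (simp_all add: Fp_def)

lemma range_of_nat_field: "range (of_nat :: nat \<Rightarrow> 'a) = of_nat ` {..<p}"
proof
  show "range (of_nat :: nat \<Rightarrow> 'a) \<subseteq> of_nat ` {..<p}"
  proof
    fix z :: 'a assume "z \<in> range of_nat"
    then obtain n where "z = of_int (int n)" by auto
    then have "z \<in> range of_int" by blast
    then show "z \<in> of_nat ` {..<p}"
      using range_of_int_eq_of_nat_lessThan_CHAR[where 'a = 'a] CHAR_field p_gt_1 by simp
  qed
qed auto

lemma card_range_of_nat: "card (range (of_nat :: nat \<Rightarrow> 'a)) = p"
  using range_of_nat_field card_of_nat_lessThan_CHAR[where 'a = 'a] CHAR_field by simp

lemma Fp_eq_range_of_nat: "Fp = range (of_nat :: nat \<Rightarrow> 'a)"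
proof -
  have "range (of_nat :: nat \<Rightarrow> 'a) \<subseteq> Fp"
  proof
    fix z :: 'a assume "z \<in> range of_nat"
    then obtain n where "z = of_nat n" by blast
    moreover have "(of_nat n :: 'a) ^ p = of_nat n"
    proof (induction n)
      case (Suc n)
      have "(of_nat n + 1 :: 'a) ^ p = of_nat n ^ p + 1" using frobenius_add[of "of_nat n" 1 1] by simp
      then show ?case using Suc by (simp add: add.commute)
    qed (use p_gt_1 in simp)
    ultimately show "z \<in> Fp" by (simp add: Fp_def)
  qed
  moreover have "card Fp \<le> p"
  proof -
    define P :: "'a poly" where "P = monom 1 p + [:0, -1:]"
    have "degree P = p" using p_gt_1 by (simp add: P_def degree_add_eq_left degree_monom_eq)
    moreover then have "P \<noteq> 0" using p_gt_1 by auto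
    moreover have "{x. poly P x = 0} = Fp" by (simp add: P_def poly_monom Fp_def)
    ultimately show ?thesis using card_poly_roots_bound by metis
  qed
  ultimately show ?thesis using card_range_of_nat by (metis card_seteq finite)
qed

lemma card_Fp: "card Fp = p"
  using Fp_eq_range_of_nat card_range_of_nat by simp

abbreviation "Tr \<equiv> (tr p m :: 'a \<Rightarrow> 'a)"

lemma tr_add: "Tr (x + y) = Tr x + Tr y"
  by (simp add: tr_def frobenius_add sum.distrib)

lemma tr_minus: "Tr (- x) = - Tr x"
  by (simp add: tr_def frobenius_minus sum_negf)

lemma tr_diff: "Tr (x - y) = Tr x - Tr y"
  by (simp add: tr_def frobenius_diff sum_subtractf)

lemma tr_0 [simp]: "Tr 0 = 0"
  using p_gt_1 by (simp add: tr_def power_0_left)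

lemma tr_mult_Fp: "k \<in> Fp \<Longrightarrow> Tr (k * x) = k * Tr x"
  by (simp add: tr_def power_mult_distrib Fp_power_p_power sum_distrib_left)

lemma tr_power_p: "Tr (x ^ p) = Tr x"
proof -
  have "Tr (x ^ p) = (\<Sum>i<m. x ^ (p ^ Suc i))"
    by (simp add: tr_def power_mult[symmetric] mult.commute)
  also have "\<dots> = (\<Sum>i\<in>Suc ` {..<m}. x ^ (p ^ i))"
    by (simp add: sum.reindex)
  also have "Suc ` {..<m} = insert m {1..<m}" 
  proof (rule set_eqI)
    fix i show "i \<in> Suc ` {..<m} \<longleftrightarrow> i \<in> insert m {1..<m}" using m_pos by (cases i) auto
  qed
  also have "(\<Sum>i\<in>insert m {1..<m}. x ^ (p ^ i)) = x ^ (p ^ m) + (\<Sum>i\<in>{1..<m}. x ^ (p ^ i))"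
    by simp
  also have "\<dots> = x ^ (p ^ 0) + (\<Sum>i\<in>{1..<m}. x ^ (p ^ i))" using power_q by simp
  also have "\<dots> = (\<Sum>i\<in>insert 0 {1..<m}. x ^ (p ^ i))" by simp
  also have "insert 0 {1..<m} = {..<m}" using m_pos by auto
  finally show ?thesis by (simp add: tr_def)
qed

lemma tr_power_p_power: "Tr (x ^ (p ^ n)) = Tr x"
proof (induction n)
  case 0 then show ?case by simp
next
  case (Suc n)
  have "x ^ (p ^ Suc n) = (x ^ (p ^ n)) ^ p" by (metis power_Suc2 power_mult)
  then show ?case using Suc tr_power_p by simp
qed

lemma tr_in_Fp: "Tr x \<in> Fp"
proof -
  have "(Tr x) ^ p = Tr (x ^ p)"
    using frobenius_sum[of "\<lambda>i. x ^ (p ^ i)" "{..<m}" 1]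
    by (simp add: tr_def power_mult[symmetric] mult.commute)
  then show ?thesis using tr_power_p by (simp add: Fp_def)
qed

lemma ex_tr_nonzero: "\<exists>x. Tr x \<noteq> 0"
proof -
  define P :: "'a poly" where "P = (\<Sum>i<m. monom 1 (p ^ i))"
  have pP: "poly P x = Tr x" for x by (simp add: P_def poly_sum poly_monom tr_def)
  have inj: "p ^ i = p ^ j \<longleftrightarrow> i = j" for i j using p_gt_1 by (simp add: power_inject_exp)
  have "coeff P (p ^ (m - 1)) = (\<Sum>i<m. if i = m - 1 then 1 else 0)"
    by (simp add: P_def coeff_sum coeff_monom inj)
  also have "\<dots> = 1" using m_pos by simp
  finally have "coeff P (p ^ (m - 1)) = 1" by simp
  then have P0: "P \<noteq> 0" by auto
  have "degree P \<le> p ^ (m - 1)" unfolding P_def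
  proof (rule degree_sum_le)
    fix i assume "i \<in> {..<m}"
    then have "p ^ i \<le> p ^ (m - 1)" using p_gt_1 by (intro power_increasing) auto
    then show "degree (monom (1::'a) (p ^ i)) \<le> p ^ (m - 1)" by (simp add: degree_monom_eq)
  qed simp
  then have "card {x. poly P x = 0} \<le> p ^ (m - 1)" using card_poly_roots_bound[OF P0] by linarith
  moreover have "p ^ (m - 1) < p ^ m" using p_gt_1 m_pos by simp
  ultimately have "card {x. poly P x = 0} < card (UNIV :: 'a set)" using card_field by simp
  then have "{x. poly P x = 0} \<noteq> UNIV" by auto
  then show ?thesis using pP by auto
qed


lemma card_fiber_linear_form:
  fixes f :: "'a \<Rightarrow> 'a" and H :: "'a set"
  assumes add: "\<And>x y. f (x + y) = f x + f y"
    and scal: "\<And>k x. k \<in> Fp \<Longrightarrow> f (k * x) = k * f x"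
    and val: "\<And>x. f x \<in> Fp"
    and H0: "0 \<in> H" and Hadd: "\<And>x y. x \<in> H \<Longrightarrow> y \<in> H \<Longrightarrow> x + y \<in> H"
    and Hneg: "\<And>x. x \<in> H \<Longrightarrow> - x \<in> H"
    and Hscal: "\<And>k x. k \<in> Fp \<Longrightarrow> x \<in> H \<Longrightarrow> k * x \<in> H"
    and h: "h \<in> H" "f h \<noteq> 0" and t: "t \<in> Fp"
  shows "card {x \<in> H. f x = t} * p = card H"
proof -
  have "f 0 + f 0 = f 0 + 0" using add[of 0 0] by simp
  then have f0: "f 0 = 0" by (simp only: add_left_cancel)
  have fneg: "f (- x) = - f x" for x using add[of x "- x"] f0 by (simp add: add_eq_0_iff)
  have fdiff: "f (x - y) = f x - f y" for x y using add[of x "- y"] fneg[of y] by simp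
  define K where "K = {x \<in> H. f x = 0}"
  have fib: "card {x \<in> H. f x = t'} = card K" if t': "t' \<in> Fp" for t'
  proof -
    define a where "a = t' / f h"
    have aF: "a \<in> Fp" unfolding a_def using t' val Fp_divide by blast
    have fa: "f (a * h) = t'" using scal[OF aF] h by (simp add: a_def)
    have ah: "a * h \<in> H" using Hscal[OF aF h(1)] .
    have "bij_betw (\<lambda>x. x + a * h) K {x \<in> H. f x = t'}"
    proof (rule bij_betw_byWitness[where f' = "\<lambda>x. x - a * h"])
      show "(\<lambda>x. x + a * h) ` K \<subseteq> {x \<in> H. f x = t'}"
        using ah fa by (auto simp: K_def add Hadd)
      show "(\<lambda>x. x - a * h) ` {x \<in> H. f x = t'} \<subseteq> K"
        using ah fa Hadd[OF _ Hneg[OF ah]] by (auto simp: K_def fdiff)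
    qed auto
    then show ?thesis by (simp add: bij_betw_same_card)
  qed
  have "H = (\<Union>t'\<in>Fp. {x \<in> H. f x = t'})" using val by auto
  then have "card H = card (\<Union>t'\<in>Fp. {x \<in> H. f x = t'})" by (rule arg_cong)
  also have "\<dots> = (\<Sum>t'\<in>Fp. card {x \<in> H. f x = t'})"
    by (rule card_UN_disjoint) auto
  also have "\<dots> = (\<Sum>t'\<in>Fp. card K)" using fib by simp
  also have "\<dots> = p * card K" using card_Fp by simp
  finally show ?thesis using fib[OF t] by simp
qed

lemma card_tr_fiber: "t \<in> Fp \<Longrightarrow> card {x. Tr x = t} = p ^ (m - 1)"
proof -
  assume t: "t \<in> Fp"
  obtain h0 where h0: "Tr h0 \<noteq> 0" using ex_tr_nonzero by blast
  have "card {x \<in> UNIV. Tr x = t} * p = card (UNIV :: 'a set)"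
    by (rule card_fiber_linear_form[where f = Tr and H = UNIV and h = h0])
       (simp_all only: tr_add tr_mult_Fp tr_in_Fp h0 t UNIV_I not_False_eq_True)
  then have "card {x. Tr x = t} * p = p ^ (m - 1) * p"
    using card_field p_power_m_eq by simp
  then show ?thesis using p_gt_1 by simp
qed

lemma card_tr_mult_fiber:
  assumes z: "z \<noteq> 0" and t: "t \<in> Fp"
  shows "card {x. Tr (z * x) = t} = p ^ (m - 1)"
proof -
  have "bij_betw (\<lambda>x. z * x) {x. Tr (z * x) = t} {x. Tr x = t}"
    by (rule bij_betw_byWitness[where f' = "\<lambda>x. x / z"]) (use z in auto)
  then show ?thesis using card_tr_fiber[OF t] by (simp add: bij_betw_same_card)
qed

lemma ex_tr_mult_nonzero: "z \<noteq> 0 \<Longrightarrow> \<exists>x. Tr (z * x) \<noteq> 0"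
proof -
  assume z: "z \<noteq> 0"
  obtain h0 where "Tr h0 \<noteq> 0" using ex_tr_nonzero by blast
  then have "Tr (z * (h0 / z)) \<noteq> 0" using z by simp
  then show ?thesis by blast
qed

lemma ex_tr_eq_1: "\<exists>x0. Tr x0 = 1"
proof -
  have "card {x. Tr x = 1} = p ^ (m - 1)" using card_tr_fiber by simp
  moreover have "p ^ (m - 1) > 0" using p_gt_1 by simp
  ultimately have "{x. Tr x = 1} \<noteq> {}" by (metis card.empty less_irrefl)
  then show ?thesis by blast
qed

lemma ex_tr_0_tr_mult_nonzero:
  assumes "a \<notin> Fp"
  shows "\<exists>h. Tr h = 0 \<and> Tr (a * h) \<noteq> 0"
proof (rule ccontr)
  assume "\<not> ?thesis"
  then have ker: "\<And>h. Tr h = 0 \<Longrightarrow> Tr (a * h) = 0" by blast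
  obtain x0 where x0: "Tr x0 = 1" using ex_tr_eq_1 by blast
  define b where "b = Tr (a * x0)"
  have "Tr ((a - b) * x) = 0" for x
  proof -
    have "Tr (x - Tr x * x0) = 0" using tr_diff tr_mult_Fp[OF tr_in_Fp] x0 by simp
    then have "Tr (a * (x - Tr x * x0)) = 0" by (rule ker)
    moreover have "Tr (a * (Tr x * x0)) = Tr x * b"
      using tr_mult_Fp[OF tr_in_Fp[of x], of "a * x0"] by (simp add: b_def mult.left_commute)
    ultimately have "Tr (a * x) = Tr x * b"
      by (simp add: right_diff_distrib tr_diff)
    moreover have "Tr (b * x) = b * Tr x" using tr_mult_Fp[OF tr_in_Fp[of "a * x0"], of x] by (simp add: b_def)
    ultimately have "Tr (a * x - b * x) = 0" by (simp add: tr_diff mult.commute)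
    then show ?thesis by (simp add: left_diff_distrib)
  qed
  then have "a = b" using ex_tr_mult_nonzero[of "a - b"] by auto
  then show False using assms tr_in_Fp[of "a * x0"] b_def by simp
qed

lemma card_tr_pair_fiber:
  assumes a: "a \<notin> Fp" and t1: "t1 \<in> Fp" and t2: "t2 \<in> Fp" and m2: "m \<ge> 2"
  shows "card {x. Tr x = t1 \<and> Tr (a * x) = t2} = p ^ (m - 2)"
proof -
  obtain x0 where x0: "Tr x0 = 1" using ex_tr_eq_1 by blast
  define K where "K = {x. Tr x = 0}"
  obtain h0 where h0: "h0 \<in> K" "Tr (a * h0) \<noteq> 0"
    using ex_tr_0_tr_mult_nonzero[OF a] by (auto simp: K_def)
  define t where "t = t2 - t1 * Tr (a * x0)"
  have tF: "t \<in> Fp" unfolding t_def using t1 t2 tr_in_Fp Fp_diff Fp_mult by blast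
  have "card {x \<in> K. Tr (a * x) = t} * p = card K"
  proof (rule card_fiber_linear_form[where f = "\<lambda>x. Tr (a * x)" and h = h0, OF _ _ _ _ _ _ _ h0 tF])
    show "Tr (a * (x + y)) = Tr (a * x) + Tr (a * y)" for x y by (simp add: distrib_left tr_add)
    show "Tr (a * (k * x)) = k * Tr (a * x)" if "k \<in> Fp" for k x
      using tr_mult_Fp[OF that, of "a * x"] by (simp add: mult.left_commute)
    show "Tr (a * x) \<in> Fp" for x by (rule tr_in_Fp)
    show "0 \<in> K" by (simp add: K_def)
    show "x + y \<in> K" if "x \<in> K" "y \<in> K" for x y using that by (simp add: K_def tr_add)
    show "- x \<in> K" if "x \<in> K" for x using that by (simp add: K_def tr_minus)
    show "k * x \<in> K" if "k \<in> Fp" "x \<in> K" for k x using that by (simp add: K_def tr_mult_Fp)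
  qed
  moreover have "card K = p ^ (m - 1)" unfolding K_def using card_tr_fiber by simp
  moreover have "p ^ (m - 1) = p ^ (m - 2) * p"
  proof -
    have "m - 1 = Suc (m - 2)" using m2 by simp
    then show ?thesis by (simp add: power_Suc2)
  qed
  ultimately have cK: "card {x \<in> K. Tr (a * x) = t} = p ^ (m - 2)" using p_gt_1 by simp
  have sc: "Tr (a * (t1 * x0)) = t1 * Tr (a * x0)"
    using tr_mult_Fp[OF t1, of "a * x0"] by (simp add: mult.left_commute)
  have sc1: "Tr (t1 * x0) = t1" using tr_mult_Fp[OF t1, of x0] x0 by simp
  have "bij_betw (\<lambda>x. x + t1 * x0) {x \<in> K. Tr (a * x) = t} {x. Tr x = t1 \<and> Tr (a * x) = t2}"
  proof (rule bij_betw_byWitness[where f' = "\<lambda>x. x - t1 * x0"])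
    show "(\<lambda>x. x + t1 * x0) ` {x \<in> K. Tr (a * x) = t} \<subseteq> {x. Tr x = t1 \<and> Tr (a * x) = t2}"
      using sc sc1 by (auto simp: K_def t_def tr_add distrib_left)
    show "(\<lambda>x. x - t1 * x0) ` {x. Tr x = t1 \<and> Tr (a * x) = t2} \<subseteq> {x \<in> K. Tr (a * x) = t}"
      using sc sc1 by (auto simp: K_def t_def tr_diff right_diff_distrib)
  qed simp_all
  then show ?thesis using cK by (simp add: bij_betw_same_card)
qed

end

section \<open>The quadratic forms and their value counts\<close>

locale D1_code = prime_power_field p m field for p m and field :: "'a::{finite,field} itself" +
  fixes u :: nat
  assumes u_pos: "u > 0" and m_even: "even m" and p_odd: "odd p"
    and m_div_gcd_mod_4: "(m div gcd m u) mod 4 = 2"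
begin

abbreviation "v \<equiv> gcd m u"
abbreviation "s \<equiv> m div 2"

lemma v_pos: "v > 0"
  using m_pos by simp

lemma m_eq_2s: "m = 2 * s"
  using m_even by simp

lemma s_pos: "s > 0"
  using m_pos m_even by presburger

lemma p_ge_3: "p \<ge> 3"
  using p_gt_1 p_odd by presburger

lemma two_neq_zero: "(2 :: 'a) \<noteq> 0"
proof
  assume "(2 :: 'a) = 0"
  then have "(of_nat 2 :: 'a) = 0" by simp
  then have "p dvd 2" using CHAR_field by (simp only: of_nat_eq_0_iff_char_dvd)
  then show False using p_ge_3 by (auto dest: dvd_imp_le)
qed

lemma p_power_v_ge_3: "p ^ v \<ge> 3"
  using p_ge_3 power_increasing[of 1 v p] v_pos by simp

lemma p_power_2v_eq: "p ^ (2 * v) - 1 = (p ^ v - 1) * (p ^ v + 1)"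
proof -
  have "p ^ (2 * v) = p ^ v * p ^ v" by (simp add: mult_2 power_add)
  then show ?thesis using p_gt_1 by (simp add: algebra_simps)
qed

lemma p_power_2v_minus_1_dvd: "p ^ (2 * v) - 1 dvd p ^ m - 1"
proof -
  obtain k where "m = 2 * v * k"
    using gcd_structure_if_quotient_mod_4_eq_2(1)[OF m_div_gcd_mod_4] by blast
  then show ?thesis using power_minus_one_dvd_power_mult_minus_one[of p "2 * v" k] by simp
qed

lemma p_power_v_plus_1_dvd_p_power_s_plus_1: "p ^ v + 1 dvd p ^ s + 1"
proof -
  obtain k where "odd k" "m = 2 * v * k"
    using gcd_structure_if_quotient_mod_4_eq_2(1)[OF m_div_gcd_mod_4] by blast
  then have "s = v * k" by simp
  then show ?thesis using odd_power_plus_one_dvd[OF \<open>odd k\<close>, of "p ^ v"] by (simp add: power_mult)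
qed

lemma power_p_power_u_eq_if_fixed:
  assumes "(x::'a) ^ (p ^ (2 * v)) = x"
  shows "x ^ (p ^ u) = x ^ (p ^ v)"
proof -
  obtain j where "u div v = 2 * j + 1"
    using gcd_structure_if_quotient_mod_4_eq_2(2)[OF m_div_gcd_mod_4] oddE by blast
  moreover have "u = v * (u div v)" by (simp add: dvd_mult_div_cancel)
  ultimately have "u = 2 * v * j + v" by (simp add: algebra_simps)
  then have "x ^ (p ^ u) = (x ^ (p ^ (2 * v * j))) ^ (p ^ v)" by (simp only: power_p_power_add[symmetric])
  then show ?thesis using power_p_power_mult_if_fixed[OF assms] by simp
qed

definition frob_u :: "'a \<Rightarrow> 'a" where "frob_u y = y ^ (p ^ u)"
definition frob_u_inv :: "'a \<Rightarrow> 'a" where "frob_u_inv y = y ^ (p ^ ((m - 1) * u))"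

lemma frob_u_frob_u_inv [simp]: "frob_u (frob_u_inv y) = y"
proof -
  have "(m - 1) * u + u = m * u" using m_pos by (cases m) auto
  then show ?thesis
    using power_p_power_mult_if_fixed[OF power_q] by (simp add: frob_u_def frob_u_inv_def flip: power_p_power_add)
qed

lemma frob_u_add: "frob_u (x + y) = frob_u x + frob_u y"
  by (simp add: frob_u_def frobenius_add)

lemma frob_u_mult: "frob_u (x * y) = frob_u x * frob_u y"
  by (simp add: frob_u_def power_mult_distrib)

lemma frob_u_minus: "frob_u (- x) = - frob_u x"
  by (simp add: frob_u_def frobenius_minus)

lemma frob_u_Fp: "c \<in> Fp \<Longrightarrow> frob_u c = c"
  by (simp add: frob_u_def Fp_power_p_power)

lemma tr_frob_u: "Tr (frob_u x) = Tr x"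
  by (simp add: frob_u_def tr_power_p_power)

definition Q :: "'a \<Rightarrow> 'a \<Rightarrow> 'a" where "Q c y = Tr (c * y ^ (p ^ u + 1))"
definition L :: "'a \<Rightarrow> 'a \<Rightarrow> 'a" where "L c w = c * (frob_u w + frob_u_inv w)"

lemma Q_add:
  assumes c: "c \<in> Fp"
  shows "Q c (y + w) = Q c y + Q c w + Tr (y * L c w)"
proof -
  have power_e: "z ^ (p ^ u + 1) = z * frob_u z" for z by (simp add: frob_u_def)
  have expand: "c * ((y + w) * (frob_u y + frob_u w))
      = c * (y * frob_u y) + c * (w * frob_u w) + (c * y * frob_u w + c * w * frob_u y)"
    by algebra
  have "Q c (y + w) = Tr (c * (y * frob_u y)) + Tr (c * (w * frob_u w))
      + (Tr (c * y * frob_u w) + Tr (c * w * frob_u y))"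
    unfolding Q_def power_e frob_u_add expand by (simp only: tr_add)
  moreover have "Q c y = Tr (c * (y * frob_u y))" and "Q c w = Tr (c * (w * frob_u w))"
    by (simp_all only: Q_def power_e)
  moreover have "Tr (c * w * frob_u y) = Tr (c * frob_u_inv w * y)"
    using tr_frob_u[of "c * frob_u_inv w * y"] by (simp add: frob_u_mult frob_u_Fp[OF c])
  moreover have "Tr (y * L c w) = Tr (c * y * frob_u w) + Tr (c * frob_u_inv w * y)"
    unfolding L_def tr_add[symmetric] by (simp only: algebra_simps)
  ultimately show ?thesis by simp
qed

lemma Q_0 [simp]: "Q c 0 = 0"
  by (simp add: Q_def)

lemma Q_in_Fp: "Q c y \<in> Fp"
  by (simp add: Q_def tr_in_Fp)

lemma Q_minus: "Q c (- y) = Q c y"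
  using p_odd by (simp add: Q_def)

lemma L_diff: "L c (x - y) = L c x - L c y"
  by (simp add: L_def frob_u_def frob_u_inv_def frobenius_diff algebra_simps)

lemma L_0 [simp]: "L c 0 = 0"
  using p_gt_1 by (simp add: L_def frob_u_def frob_u_inv_def power_0_left)

lemma L_eq_0_imp:
  assumes c: "c \<in> Fp" "c \<noteq> 0" and w: "L c w = 0"
  shows "w = 0"
proof -
  (* w^(p^u) = - w^(p^-u) gives w^(p^2u) = - w, so w is fixed by the Frobenius powers
     p^4u and p^m, hence by p^gcd(4u, m) = p^2v and thus by p^2u: w = - w. *)
  have "frob_u w = - frob_u_inv w" using w c by (simp add: L_def eq_neg_iff_add_eq_0)
  then have "frob_u (frob_u w) = - w" by (simp add: frob_u_minus)
  then have w2u: "w ^ (p ^ (2 * u)) = - w" by (simp add: frob_u_def mult_2 power_p_power_add)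
  have "w ^ (p ^ (4 * u)) = w"
    using w2u power_p_power_add[of w "2 * u" "2 * u"] by (simp add: frobenius_minus)
  then have "w ^ (p ^ gcd (4 * u) m) = w"
    using power_p_power_gcd_if_fixed[of "4 * u" w m] power_q u_pos by simp
  then have "w ^ (p ^ (2 * v)) = w"
    using gcd_structure_if_quotient_mod_4_eq_2(3)[OF m_div_gcd_mod_4] by simp
  then have "w ^ (p ^ (2 * u)) = w"
    using power_p_power_mult_if_fixed[of w "2 * v" "u div v"] by (simp add: mult.assoc)
  then have "w + w = 0" using w2u by simp
  then show ?thesis using two_neq_zero by (simp flip: mult_2)
qed

lemma bij_L: "c \<in> Fp \<Longrightarrow> c \<noteq> 0 \<Longrightarrow> bij (L c)"
proof -
  assume c: "c \<in> Fp" "c \<noteq> 0"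
  have "inj (L c)"
  proof (rule injI)
    fix x y assume "L c x = L c y"
    then have "L c (x - y) = 0" by (simp add: L_diff)
    then have "x - y = 0" by (rule L_eq_0_imp[OF c])
    then show "x = y" by simp
  qed
  then show ?thesis using finite_UNIV_inj_surj[of "L c"] by (simp add: bij_def)
qed

lemma Q_eq_tr_L_iff_shift:
  assumes c: "c \<in> Fp"
  shows "{y. Q c y = Tr (L c w * y)} = (\<lambda>y. y + w) ` {y. Q c y = Q c w}"
proof (intro equalityI subsetI)
  have shift: "Q c (y - w) = Q c y + Q c w - Tr (y * L c w)" for y
    using Q_add[OF c, of y "- w"] Q_minus[of c w] L_diff[of c 0 w] by (simp add: tr_minus)
  fix y
  show "y \<in> (\<lambda>y. y + w) ` {y. Q c y = Q c w}" if "y \<in> {y. Q c y = Tr (L c w * y)}"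
  proof (rule rev_image_eqI)
    show "y - w \<in> {y. Q c y = Q c w}" using that shift[of y] by (simp add: mult.commute)
  qed simp
  show "y \<in> {y. Q c y = Tr (L c w * y)}" if "y \<in> (\<lambda>y. y + w) ` {y. Q c y = Q c w}"
    using that shift[of y] by (auto simp: mult.commute)
qed

definition NQ :: "'a \<Rightarrow> 'a \<Rightarrow> nat" where "NQ c t = card {y. Q c y = t}"

lemma sum_NQ: "(\<Sum>t\<in>Fp. NQ c t) = p ^ m"
  using sum_comp_eq_sum_card_fiber[of Fp "Q c" "\<lambda>_. 1"] Q_in_Fp card_field
  by (simp add: NQ_def Fp_eq_range_of_nat)

lemma sum_NQ_squared:
  assumes c: "c \<in> Fp" "c \<noteq> 0"
  shows "(\<Sum>t\<in>Fp. NQ c t * NQ c t) = p ^ m + (p ^ m - 1) * p ^ (m - 1)"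
proof -
  have "(\<Sum>t\<in>Fp. NQ c t * NQ c t) = (\<Sum>z\<in>UNIV. NQ c (Q c z))"
    using sum_comp_eq_sum_card_fiber[of Fp "Q c" "NQ c"] Q_in_Fp
    by (simp add: NQ_def Fp_eq_range_of_nat)
  also have "\<dots> = card {(y, z). Q c y = Q c z}"
    by (simp add: card_pairs_eq_sum_snd NQ_def)
  also have "\<dots> = card {(y, w). Q c (y + w) = Q c y}"
    by (rule bij_betw_same_card[of "\<lambda>(y, z). (y, z - y)"],
        rule bij_betw_byWitness[where f' = "\<lambda>(y, w). (y, y + w)"]) auto
  also have "\<dots> = (\<Sum>w\<in>UNIV. card {y. Q c (y + w) = Q c y})"
    by (rule card_pairs_eq_sum_snd)
  also have "\<dots> = (\<Sum>w\<in>(UNIV :: 'a set). if w = 0 then p ^ m else p ^ (m - 1))"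
  proof (rule sum.cong)
    fix w :: 'a
    have "{y. Q c (y + w) = Q c y} = {y. Tr (L c w * y) = - Q c w}"
      using Q_add[OF c(1)] by (auto simp: mult.commute add.assoc eq_neg_iff_add_eq_0 add.commute)
    moreover have "L c w \<noteq> 0" if "w \<noteq> 0" using L_eq_0_imp[OF c] that by blast
    ultimately show "card {y. Q c (y + w) = Q c y} = (if w = 0 then p ^ m else p ^ (m - 1))"
      using card_field card_tr_mult_fiber Fp_minus[OF Q_in_Fp] by auto
  qed simp
  also have "\<dots> = p ^ m + (p ^ m - 1) * p ^ (m - 1)"
    using card_field by (simp add: sum.If_cases card_Diff_singleton Compl_eq_Diff_UNIV)
  finally show ?thesis .
qed

lemma ex_power_p_power_u_plus_1_eq:
  assumes t: "t \<in> Fp" "t \<noteq> 0"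
  shows "\<exists>\<mu>::'a. \<mu> ^ (p ^ u + 1) = t"
proof -
  (* t is a (p^v - 1)-th root of unity, hence the (p^v + 1)-th power of some \<mu> in F_(p^2v),
     on which \<mu>^(p^u) = \<mu>^(p^v) because u/v is odd *)
  have "t * t ^ (p - 1) = t ^ Suc (p - 1)" by simp
  also have "\<dots> = t" using t(1) p_gt_1 by (simp add: Fp_def)
  finally have "t ^ (p - 1) = 1" using t(2) by simp
  moreover obtain r where "p ^ v - 1 = (p - 1) * r"
    using power_minus_one_dvd_power_mult_minus_one[of p 1 v] by (auto elim: dvdE)
  ultimately have "t ^ (p ^ v - 1) = 1" by (simp add: power_mult)
  moreover have "(p ^ v - 1) * (p ^ v + 1) dvd card (UNIV :: 'a set) - 1"
    using p_power_2v_minus_1_dvd p_power_2v_eq card_field by simp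
  moreover have "p ^ v - 1 > 0" using p_power_v_ge_3 by simp
  ultimately have "t \<in> (\<lambda>x. x ^ (p ^ v + 1)) ` {x::'a. x ^ ((p ^ v - 1) * (p ^ v + 1)) = 1}"
    using power_image_roots_of_unity[of "p ^ v - 1" "p ^ v + 1", where 'a = 'a] by simp
  then obtain \<mu> :: 'a where \<mu>: "\<mu> ^ ((p ^ v - 1) * (p ^ v + 1)) = 1" "\<mu> ^ (p ^ v + 1) = t"
    by blast
  have "p ^ (2 * v) = Suc (p ^ (2 * v) - 1)" using p_gt_1 by simp
  then have "\<mu> ^ (p ^ (2 * v)) = \<mu> * \<mu> ^ ((p ^ v - 1) * (p ^ v + 1))"
    by (metis power_Suc p_power_2v_eq)
  then have "\<mu> ^ (p ^ (2 * v)) = \<mu>" using \<mu>(1) by simp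
  then have "\<mu> ^ (p ^ u + 1) = t"
    using power_p_power_u_eq_if_fixed \<mu>(2) by simp
  then show ?thesis ..
qed

lemma NQ_eq_NQ_1:
  assumes t: "t \<in> Fp" "t \<noteq> 0"
  shows "NQ c t = NQ c 1"
proof -
  obtain \<mu> :: 'a where \<mu>: "\<mu> ^ (p ^ u + 1) = t" using ex_power_p_power_u_plus_1_eq[OF t] by blast
  then have "\<mu> \<noteq> 0" using t(2) by (auto simp: power_0_left)
  have Q_scale: "Q c (\<mu> * y) = t * Q c y" for y
  proof -
    have "c * (\<mu> * y) ^ (p ^ u + 1) = t * (c * y ^ (p ^ u + 1))"
      by (simp only: power_mult_distrib \<mu> mult.left_commute)
    then show ?thesis unfolding Q_def by (simp only: tr_mult_Fp[OF t(1)])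
  qed
  have "bij_betw (\<lambda>y. \<mu> * y) {y. Q c y = 1} {y. Q c y = t}"
  proof (rule bij_betw_byWitness[where f' = "\<lambda>y. y / \<mu>"])
    show "(\<lambda>y. \<mu> * y) ` {y. Q c y = 1} \<subseteq> {y. Q c y = t}" using Q_scale by auto
    show "(\<lambda>y. y / \<mu>) ` {y. Q c y = t} \<subseteq> {y. Q c y = 1}"
    proof
      fix z assume "z \<in> (\<lambda>y. y / \<mu>) ` {y. Q c y = t}"
      then obtain y where "Q c y = t" "z = y / \<mu>" by blast
      then have "t * Q c z = t" using Q_scale[of z] \<open>\<mu> \<noteq> 0\<close> by simp
      then show "z \<in> {y. Q c y = 1}" using t(2) by simp
    qed
  qed (use \<open>\<mu> \<noteq> 0\<close> in simp_all)
  then show ?thesis by (simp add: NQ_def bij_betw_same_card)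
qed

lemma power_p_power_u_plus_1_eq_1:
  assumes l: "(l::'a) ^ (p ^ v + 1) = 1"
  shows "l ^ (p ^ u + 1) = 1"
proof -
  have "l * l ^ (p ^ v) = 1" using l by simp
  then have l_inv: "l ^ (p ^ v) = inverse l" by (simp add: inverse_unique)
  have "l ^ (p ^ (2 * v)) = (l ^ (p ^ v)) ^ (p ^ v)" by (simp only: mult_2 power_p_power_add)
  also have "\<dots> = l" using l_inv by (simp add: power_inverse)
  finally have "l ^ (p ^ u) = l ^ (p ^ v)" by (rule power_p_power_u_eq_if_fixed)
  then show ?thesis using l by simp
qed

lemma p_power_v_plus_1_dvd_NQ_1: "p ^ v + 1 dvd NQ c 1"
proof -
  have "p ^ v + 1 dvd p ^ (2 * v) - 1" by (simp only: p_power_2v_eq dvd_triv_right)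
  then have "p ^ v + 1 dvd card (UNIV :: 'a set) - 1"
    using p_power_2v_minus_1_dvd card_field by (metis dvd_trans)
  then have "card {g::'a. g ^ (p ^ v + 1) = 1} = p ^ v + 1"
    by (intro card_roots_of_unity_finite_field) simp_all
  moreover have "card {g::'a. g ^ (p ^ v + 1) = 1} dvd card {y. Q c y = 1}"
  proof (rule card_roots_of_unity_dvd_card_if_mult_stable)
    fix g y :: 'a assume "g ^ (p ^ v + 1) = 1" "y \<in> {y. Q c y = 1}"
    then have "(g * y) ^ (p ^ u + 1) = y ^ (p ^ u + 1)"
      using power_p_power_u_plus_1_eq_1 by (simp only: power_mult_distrib mult_1)
    then show "g * y \<in> {y. Q c y = 1}" using \<open>y \<in> {y. Q c y = 1}\<close> by (simp only: mem_Collect_eq Q_def)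
  qed simp_all
  ultimately show ?thesis by (simp add: NQ_def)
qed

lemma NQ_1_plus_neq: "NQ c 1 + p ^ (s - 1) \<noteq> p ^ (m - 1)"
proof
  (* otherwise p^v + 1 would divide p^s - 1 as well as p^s + 1 *)
  assume H: "NQ c 1 + p ^ (s - 1) = p ^ (m - 1)"
  have "m - 1 = (s - 1) + s" using m_eq_2s s_pos by simp
  then have "p ^ (m - 1) = p ^ (s - 1) * p ^ s" by (simp add: power_add)
  then have "NQ c 1 = p ^ (s - 1) * p ^ s - p ^ (s - 1)" using H by linarith
  then have "NQ c 1 = p ^ (s - 1) * (p ^ s - 1)" by (simp add: right_diff_distrib')
  then have "p ^ v + 1 dvd p ^ (s - 1) * (p ^ s - 1)" using p_power_v_plus_1_dvd_NQ_1 by metis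
  moreover have "coprime (p ^ v + 1) (p ^ (s - 1))"
  proof -
    have "p dvd p ^ v" using v_pos by simp
    then have "\<not> p dvd p ^ v + 1" using p_gt_1 by (metis dvd_add_right_iff nat_dvd_1_iff_1 less_irrefl)
    then show ?thesis using prime_p by (simp add: prime_imp_coprime coprime_commute)
  qed
  ultimately have "p ^ v + 1 dvd p ^ s - 1" by (simp add: coprime_dvd_mult_right_iff)
  then have "p ^ v + 1 dvd (p ^ s + 1) - (p ^ s - 1)"
    using p_power_v_plus_1_dvd_p_power_s_plus_1 by (rule dvd_diff_nat[rotated])
  moreover have "(p ^ s + 1) - (p ^ s - 1) = 2" using p_gt_1 by simp
  ultimately show False using p_power_v_ge_3 by (auto dest: dvd_imp_le)
qed

lemma sum_Fp_eq_split:
  assumes "\<And>t. t \<in> Fp \<Longrightarrow> t \<noteq> 0 \<Longrightarrow> g t = g 1"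
  shows "(\<Sum>t\<in>Fp. g t) = g 0 + (p - 1) * (g 1 :: nat)"
proof -
  have "(\<Sum>t\<in>Fp. g t) = g 0 + (\<Sum>t\<in>Fp - {0}. g t)" by (rule sum.remove) simp_all
  also have "(\<Sum>t\<in>Fp - {0}. g t) = (\<Sum>t\<in>Fp - {0}. g 1)"
    by (rule sum.cong[OF refl], rule assms) auto
  finally show ?thesis using card_Fp by simp
qed

lemma NQ_first_moment: "NQ c 0 + (p - 1) * NQ c 1 = p ^ m"
proof -
  have "(\<Sum>t\<in>Fp. NQ c t) = NQ c 0 + (p - 1) * NQ c 1"
    by (rule sum_Fp_eq_split) (rule NQ_eq_NQ_1)
  then show ?thesis using sum_NQ by simp
qed

lemma NQ_second_moment:
  assumes "c \<in> Fp" "c \<noteq> 0"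
  shows "NQ c 0 * NQ c 0 + (p - 1) * (NQ c 1 * NQ c 1) = p ^ m + (p ^ m - 1) * p ^ (m - 1)"
proof -
  have "(\<Sum>t\<in>Fp. NQ c t * NQ c t) = NQ c 0 * NQ c 0 + (p - 1) * (NQ c 1 * NQ c 1)"
    by (rule sum_Fp_eq_split) (metis NQ_eq_NQ_1)
  then show ?thesis using sum_NQ_squared[OF assms] by simp
qed

lemma NQ_1_eq:
  assumes c: "c \<in> Fp" "c \<noteq> 0"
  shows "NQ c 1 = p ^ (m - 1) + p ^ (s - 1)"
proof -
  (* Eliminating NQ c 0 from the two moments leaves p (NQ c 1 - p^(m-1))^2 = p^(m-1)
     = p (p^(s-1))^2; NQ_1_plus_neq excludes the negative root. *)
  define a b A B P where "a = int (NQ c 0)" and "b = int (NQ c 1)" and "A = int (p ^ (m - 1))"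
    and "B = int (p ^ (s - 1))" and "P = int p"
  have pm: "int (p ^ m) = P * A" using p_power_m_eq by (simp add: P_def A_def)
  have p1: "int (p - 1) = P - 1" using p_gt_1 by (simp add: P_def of_nat_diff)
  have q1: "int (p ^ m - 1) = P * A - 1" using pm p_gt_1 by (simp add: of_nat_diff)
  have e1: "a + (P - 1) * b = P * A"
    using arg_cong[OF NQ_first_moment[of c], of int] pm p1 by (simp add: a_def b_def)
  have e2: "a * a + (P - 1) * (b * b) = P * A + (P * A - 1) * A"
    using arg_cong[OF NQ_second_moment[OF c], of int] pm q1 p1 by (simp add: a_def b_def A_def)
  have a_eq: "a = P * A - (P - 1) * b" using e1 by simp
  have "(P - 1) * (P * (b - A)\<^sup>2 - A) = a * a + (P - 1) * (b * b) - (P * A + (P * A - 1) * A)"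
    unfolding a_eq by (simp add: power2_eq_square algebra_simps)
  then have "(P - 1) * (P * (b - A)\<^sup>2 - A) = 0" using e2 by simp
  moreover have "P - 1 \<noteq> 0" using p_gt_1 by (simp add: P_def)
  ultimately have "P * (b - A)\<^sup>2 = A" by simp
  moreover have "A = P * B\<^sup>2"
  proof -
    have "m - 1 = 1 + 2 * (s - 1)" using m_eq_2s s_pos by simp
    then show ?thesis
      by (simp add: A_def P_def B_def power_add power_mult power2_eq_square power_mult_distrib)
  qed
  ultimately have "(b - A)\<^sup>2 = B\<^sup>2" using p_gt_1 by (simp add: P_def)
  then have "b - A = B \<or> b - A = - B" by (simp add: power2_eq_iff)
  moreover have "b - A \<noteq> - B"
  proof
    assume "b - A = - B"
    then have "NQ c 1 + p ^ (s - 1) = p ^ (m - 1)" unfolding b_def A_def B_def by linarith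
    then show False using NQ_1_plus_neq by blast
  qed
  ultimately have "b = A + B" by simp
  then show ?thesis unfolding b_def A_def B_def by linarith
qed

lemma NQ_0_eq:
  assumes "c \<in> Fp" "c \<noteq> 0"
  shows "NQ c 0 + (p - 1) * p ^ (s - 1) = p ^ (m - 1)"
proof -
  obtain p' where p': "p = Suc p'" using p_gt_1 by (cases p) auto
  have "NQ c 0 + p' * (p ^ (m - 1) + p ^ (s - 1)) = p ^ (m - 1) * Suc p'"
    using NQ_first_moment[of c] NQ_1_eq[OF assms] p_power_m_eq p' by simp
  then show ?thesis using p' by (simp add: algebra_simps)
qed

section \<open>Weights of the code\<close>

abbreviation wt :: "'a \<Rightarrow> 'a \<Rightarrow> nat"
  where "wt a b \<equiv> hw p m u (cw p m u a b :: 'a \<times> 'a \<Rightarrow> 'a)"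

(* Tr x + Q 1 y is Tr (x + y^(p^u+1)); phrased through Q so that simp keeps the power folded *)
definition zeros :: "'a \<Rightarrow> 'a \<Rightarrow> ('a \<times> 'a) set" where
  "zeros a b = {(x, y). Tr x + Q 1 y = 0 \<and> Tr (a * x + b * y) = 0}"

lemma card_zeros_slice: "card {x. Tr x + Q 1 y = 0} = p ^ (m - 1)"
proof -
  have "{x. Tr x + Q 1 y = 0} = {x. Tr x = - Q 1 y}" by (auto simp: eq_neg_iff_add_eq_0)
  then show ?thesis using card_tr_fiber[OF Fp_minus[OF Q_in_Fp]] by simp
qed

lemma card_zeros_0_0: "card (zeros 0 0) = p ^ (2 * m - 1)"
proof -
  have "card (zeros 0 0) = card {(x, y). Tr x + Q 1 y = 0}" by (simp add: zeros_def)
  also have "\<dots> = (\<Sum>y\<in>(UNIV :: 'a set). p ^ (m - 1))"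
    by (simp only: card_pairs_eq_sum_snd card_zeros_slice)
  also have "\<dots> = p ^ (m + (m - 1))" using card_field by (simp add: power_add)
  finally show ?thesis using m_pos by (simp add: mult_2)
qed

lemma card_D1: "card (D1 p m u :: ('a \<times> 'a) set) = p ^ (2 * m - 1) - 1"
proof -
  have "D1 p m u = zeros 0 0 - {(0, 0)}" by (auto simp: D1_def zeros_def Q_def tr_add)
  moreover have "(0, 0) \<in> zeros 0 0" by (simp add: zeros_def)
  ultimately show ?thesis using card_zeros_0_0 by simp
qed

lemma wt_eq: "wt a b = p ^ (2 * m - 1) - card (zeros a b)"
proof -
  have "{d \<in> D1 p m u. cw p m u a b d \<noteq> 0} = zeros 0 0 - zeros a b"
    by (auto simp: D1_def zeros_def cw_def Q_def tr_add split: if_splits)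
  moreover have "zeros a b \<subseteq> zeros 0 0" by (auto simp: zeros_def)
  ultimately show ?thesis using card_zeros_0_0 by (simp add: hw_def card_Diff_subset)
qed

lemma card_zeros_0: assumes "b \<noteq> 0" shows "card (zeros 0 b) = p ^ (2 * m - 2)"
proof -
  have "card (zeros 0 b) = card {(x, y). Tr x + Q 1 y = 0 \<and> Tr (b * y) = 0}"
    by (simp add: zeros_def)
  also have "\<dots> = (\<Sum>y\<in>(UNIV :: 'a set). if Tr (b * y) = 0 then p ^ (m - 1) else 0)"
    unfolding card_pairs_eq_sum_snd by (rule sum.cong) (simp_all add: card_zeros_slice)
  also have "\<dots> = p ^ (m - 1) * card {y. Tr (b * y) = 0}"
    by (simp add: sum.If_cases Int_def)
  also have "\<dots> = p ^ ((m - 1) + (m - 1))"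
    using card_tr_mult_fiber[OF assms Fp_0] by (simp add: power_add)
  also have "(m - 1) + (m - 1) = 2 * m - 2" using m_pos by simp
  finally show ?thesis .
qed

lemma card_zeros_not_Fp: assumes "a \<notin> Fp" shows "card (zeros a b) = p ^ (2 * m - 2)"
proof -
  have "card {x. Tr x + Q 1 y = 0 \<and> Tr (a * x + b * y) = 0} = p ^ (m - 2)" for y
  proof -
    have "{x. Tr x + Q 1 y = 0 \<and> Tr (a * x + b * y) = 0} = {x. Tr x = - Q 1 y \<and> Tr (a * x) = - Tr (b * y)}"
      by (auto simp: tr_add eq_neg_iff_add_eq_0)
    then show ?thesis
      using card_tr_pair_fiber[OF assms Fp_minus[OF Q_in_Fp] Fp_minus[OF tr_in_Fp]] m_eq_2s s_pos
      by simp
  qed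
  then have "card (zeros a b) = (\<Sum>y\<in>(UNIV :: 'a set). p ^ (m - 2))"
    unfolding zeros_def card_pairs_eq_sum_snd by simp
  also have "\<dots> = p ^ (m + (m - 2))" using card_field by (simp add: power_add)
  also have "m + (m - 2) = 2 * m - 2" using m_eq_2s s_pos by simp
  finally show ?thesis .
qed

lemma card_zeros_L:
  assumes a: "a \<in> Fp" "a \<noteq> 0"
  shows "card (zeros a (L a w)) = p ^ (m - 1) * NQ a (Q a w)"
proof -
  (* for each y, x ranges over a trace fibre, on which Tr (a x + L a w y) = Tr (L a w y) - Q a y *)
  have "Tr (a * x + L a w * y) = Tr (L a w * y) - Q a y" if "Tr x + Q 1 y = 0" for x y
  proof -
    have "Q a y = a * Q 1 y" using tr_mult_Fp[OF a(1)] by (simp add: Q_def mult.assoc)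
    moreover have "Tr x = - Q 1 y" using that by (simp add: eq_neg_iff_add_eq_0)
    ultimately show ?thesis by (simp add: tr_add tr_mult_Fp[OF a(1)])
  qed
  then have slice: "card {x. Tr x + Q 1 y = 0 \<and> Tr (a * x + L a w * y) = 0}
      = (if Q a y = Tr (L a w * y) then p ^ (m - 1) else 0)" for y
    using card_zeros_slice[of y] by (cases "Q a y = Tr (L a w * y)") (simp_all cong: conj_cong)
  have "card (zeros a (L a w)) = (\<Sum>y\<in>(UNIV :: 'a set). if Q a y = Tr (L a w * y) then p ^ (m - 1) else 0)"
    unfolding zeros_def card_pairs_eq_sum_snd slice ..
  also have "\<dots> = p ^ (m - 1) * card {y. Q a y = Tr (L a w * y)}"
    by (simp add: sum.If_cases Int_def)
  also have "{y. Q a y = Tr (L a w * y)} = (\<lambda>y. y + w) ` {y. Q a y = Q a w}"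
    by (rule Q_eq_tr_L_iff_shift[OF a(1)])
  finally show ?thesis by (simp add: card_image NQ_def)
qed

abbreviation "P1 \<equiv> real p ^ (m - 1)"
abbreviation "S1 \<equiv> real p ^ (s - 1)"

definition w1 :: real where "w1 = (real p - 1) * real p ^ (2 * m - 2)"
definition w2 :: real where "w2 = (real p - 1) * real p ^ (2 * m - 2) * (1 + 1 / real p ^ s)"
definition w3 :: real where
  "w3 = (real p - 1) * real p ^ (2 * m - 2) * (1 - 1 / ((real p - 1) * real p ^ s))"

lemma P1_eq: "P1 = real p * S1\<^sup>2"
proof -
  have "m - 1 = 1 + (s - 1) * 2" using m_eq_2s s_pos by simp
  then show ?thesis by (simp add: power_add power_mult)
qed

lemma real_p_power_s: "real p ^ s = real p * S1"
  using s_pos by (simp add: power_eq_if)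

lemma real_p_power_2m_2: "real p ^ (2 * m - 2) = P1\<^sup>2"
proof -
  have "2 * m - 2 = (m - 1) * 2" using m_pos by simp
  then show ?thesis by (simp add: power_mult)
qed

lemma w1_eq: "w1 = (real p - 1) * P1\<^sup>2"
  by (simp add: w1_def real_p_power_2m_2)

lemma w2_eq: "w2 = (real p - 1) * P1\<^sup>2 + (real p - 1) * P1 * S1"
  using p_gt_1 unfolding w2_def real_p_power_2m_2 real_p_power_s P1_eq
  by (simp add: field_simps power2_eq_square)

lemma w3_eq: "w3 = (real p - 1) * P1\<^sup>2 - P1 * S1"
  using p_ge_3 unfolding w3_def real_p_power_2m_2 real_p_power_s P1_eq
  by (simp add: field_simps power2_eq_square)

lemma w_pos: "w1 > 0" "w2 > 0" "w3 > 0"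
proof -
  have "S1 \<ge> 1" using p_gt_1 by simp
  have "S1 \<le> real p * S1" using \<open>S1 \<ge> 1\<close> p_gt_1 by simp
  also have "\<dots> \<le> real p * S1 * S1" using \<open>S1 \<ge> 1\<close> p_gt_1 by simp
  finally have "S1 \<le> P1" using P1_eq by (simp add: power2_eq_square mult.assoc)
  have "P1 > 0" using p_gt_1 by simp
  show "w1 > 0" using \<open>P1 > 0\<close> p_gt_1 by (simp add: w1_eq)
  show "w2 > 0" unfolding w2_eq using p_gt_1 by (intro add_pos_pos mult_pos_pos) auto
  have "P1 * S1 \<le> P1 * P1" using \<open>S1 \<le> P1\<close> \<open>P1 > 0\<close> by simp
  moreover have "P1 * P1 < (real p - 1) * (P1 * P1)" using \<open>P1 > 0\<close> p_ge_3 by simp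
  ultimately show "w3 > 0" unfolding w3_eq power2_eq_square by linarith
qed

lemma w_distinct: "w1 \<noteq> w2" "w1 \<noteq> w3" "w2 \<noteq> w3"
proof -
  have "P1 * S1 > 0" using p_gt_1 by simp
  moreover have "(real p - 1) * P1 * S1 > 0" using p_gt_1 by simp
  ultimately show "w1 \<noteq> w2" "w1 \<noteq> w3" "w2 \<noteq> w3" unfolding w1_eq w2_eq w3_eq by linarith+
qed

lemma real_wt: "real (wt a b) = real p * P1\<^sup>2 - real (card (zeros a b))"
proof -
  have "zeros a b \<subseteq> zeros 0 0" by (auto simp: zeros_def)
  then have "card (zeros a b) \<le> card (zeros 0 0)" by (simp add: card_mono)
  then have "card (zeros a b) \<le> p ^ (2 * m - 1)" using card_zeros_0_0 by simp
  moreover have "2 * m - 1 = Suc ((m - 1) * 2)" using m_pos by simp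
  ultimately show ?thesis by (simp add: wt_eq of_nat_diff power_mult)
qed

lemma wt_0_0: "wt 0 0 = 0"
  by (simp add: wt_eq card_zeros_0_0)

lemma wt_eq_w1:
  assumes "(a = 0 \<and> b \<noteq> 0) \<or> a \<notin> Fp"
  shows "real (wt a b) = w1"
proof -
  have "card (zeros a b) = p ^ (2 * m - 2)" using assms card_zeros_0 card_zeros_not_Fp by blast
  then have "real (card (zeros a b)) = P1\<^sup>2" using real_p_power_2m_2 by simp
  then show ?thesis by (simp add: real_wt w1_eq algebra_simps)
qed

lemma wt_L:
  assumes a: "a \<in> Fp" "a \<noteq> 0"
  shows "real (wt a (L a w)) = (if Q a w = 0 then w2 else w3)"
proof (cases "Q a w = 0")
  case True
  have "real (NQ a 0) = P1 - (real p - 1) * S1"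
    using arg_cong[OF NQ_0_eq[OF a], of real] p_gt_1 by (simp add: of_nat_diff)
  then have "real (card (zeros a (L a w))) = P1 * (P1 - (real p - 1) * S1)"
    using True card_zeros_L[OF a] by simp
  then show ?thesis using True by (simp add: real_wt w2_eq power2_eq_square algebra_simps)
next
  case False
  have "real (NQ a (Q a w)) = P1 + S1"
    using NQ_eq_NQ_1[OF Q_in_Fp False] NQ_1_eq[OF a] by simp
  then have "real (card (zeros a (L a w))) = P1 * (P1 + S1)"
    using card_zeros_L[OF a] by simp
  then show ?thesis using False by (simp add: real_wt w3_eq power2_eq_square algebra_simps)
qed

lemma wt_pos: "(a, b) \<noteq> (0, 0) \<Longrightarrow> wt a b > 0"
proof -
  assume ab: "(a, b) \<noteq> (0, 0)"
  show ?thesis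
  proof (cases "a \<in> Fp \<and> a \<noteq> 0")
    case True
    then obtain w where "b = L a w" using bij_L by (metis bij_pointE)
    then have "real (wt a b) \<in> {w2, w3}" using wt_L[of a w] True by simp
    then show ?thesis using w_pos by auto
  next
    case False
    then have "real (wt a b) = w1" using ab wt_eq_w1 by auto
    then show ?thesis using w_pos by simp
  qed
qed

lemma real_NQ_0: "a \<in> Fp \<Longrightarrow> a \<noteq> 0 \<Longrightarrow> real (NQ a 0) = P1 - (real p - 1) * S1"
  using arg_cong[OF NQ_0_eq, of a real] p_gt_1 by (simp add: of_nat_diff)

lemma Fp_if_wt_w2_or_w3:
  assumes "real (wt a b) \<in> {w2, w3}"
  shows "a \<in> Fp - {0}"
proof (rule ccontr)
  assume "a \<notin> Fp - {0}"
  then have "real (wt a b) \<in> {0, w1}" using wt_eq_w1[of a b] wt_0_0 by (cases "b = 0") auto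
  then show False using assms w_pos w_distinct by auto
qed

lemma pairs_wt_w2_or_w3:
  assumes "W \<in> {w2, w3}"
  shows "{(a, b). real (wt a b) = W}
    = Sigma (Fp - {0}) (\<lambda>a. L a ` {w. (if Q a w = 0 then w2 else w3) = W})"
proof (intro equalityI subsetI)
  fix ab assume "ab \<in> {(a, b). real (wt a b) = W}"
  then obtain a b where ab: "ab = (a, b)" "real (wt a b) = W" by blast
  then have a: "a \<in> Fp - {0}" using Fp_if_wt_w2_or_w3[of a b] assms by simp
  then obtain w where "b = L a w" using bij_L by (metis DiffE insertI1 bij_pointE)
  then show "ab \<in> Sigma (Fp - {0}) (\<lambda>a. L a ` {w. (if Q a w = 0 then w2 else w3) = W})"
    using ab a wt_L[of a w] by auto
next
  fix ab assume "ab \<in> Sigma (Fp - {0}) (\<lambda>a. L a ` {w. (if Q a w = 0 then w2 else w3) = W})"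
  then show "ab \<in> {(a, b). real (wt a b) = W}" using wt_L by auto
qed

lemma card_pairs_wt_w2_or_w3:
  assumes "W \<in> {w2, w3}"
  shows "card {(a, b). real (wt a b) = W}
    = (\<Sum>a\<in>Fp - {0}. card {w. (if Q a w = 0 then w2 else w3) = W})"
  unfolding pairs_wt_w2_or_w3[OF assms]
  using bij_L by (simp add: card_image bij_is_inj inj_on_subset[OF _ subset_UNIV])

lemma card_pairs_wt_w2:
  "real (card {(a, b). real (wt a b) = w2}) = (real p - 1) * (P1 - (real p - 1) * S1)"
proof -
  have "card {(a, b). real (wt a b) = w2} = (\<Sum>a\<in>Fp - {0}. NQ a 0)"
    using card_pairs_wt_w2_or_w3[of w2] w_distinct by (simp add: NQ_def)
  then show ?thesis using card_Fp p_gt_1 by (simp add: real_NQ_0 of_nat_diff)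
qed

lemma card_pairs_wt_w3:
  "real (card {(a, b). real (wt a b) = w3})
    = (real p - 1) * (real p * P1 - P1 + (real p - 1) * S1)"
proof -
  have "card {(a, b). real (wt a b) = w3} = (\<Sum>a\<in>Fp - {0}. card (UNIV - {w. Q a w = 0}))"
    using card_pairs_wt_w2_or_w3[of w3] w_distinct by (simp add: Collect_neg_eq Compl_eq_Diff_UNIV)
  moreover have "real (card (UNIV - {w. Q a w = 0})) = real p * P1 - P1 + (real p - 1) * S1"
    if "a \<in> Fp - {0}" for a
  proof -
    have "card {w. Q a w = 0} \<le> p ^ m" using card_field card_mono[of UNIV "{w. Q a w = 0}"] by simp
    moreover have "real (p ^ m) = real p * P1" using p_power_m_eq by simp
    ultimately show ?thesis using card_field real_NQ_0[of a] that
      by (simp add: card_Diff_subset NQ_def of_nat_diff)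
  qed
  ultimately have "real (card {(a, b). real (wt a b) = w3})
      = (\<Sum>a\<in>Fp - {0}. real p * P1 - P1 + (real p - 1) * S1)"
    by simp
  then show ?thesis using card_Fp p_gt_1 by (simp add: of_nat_diff)
qed

lemma pairs_wt_w1: "{(a, b). real (wt a b) = w1} = UNIV - {(0, 0)} - (Fp - {0}) \<times> UNIV"
proof (intro equalityI subsetI)
  fix ab :: "'a \<times> 'a" assume "ab \<in> {(a, b). real (wt a b) = w1}"
  then obtain a b where ab: "ab = (a, b)" "real (wt a b) = w1" by blast
  then have "(a, b) \<noteq> (0, 0)" using wt_0_0 w_pos by auto
  moreover have "a \<notin> Fp - {0}"
  proof
    assume a: "a \<in> Fp - {0}"
    then obtain w where "b = L a w" using bij_L by (metis DiffE insertI1 bij_pointE)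
    then show False using ab a wt_L[of a w] w_distinct by (auto split: if_splits)
  qed
  ultimately show "ab \<in> UNIV - {(0, 0)} - (Fp - {0}) \<times> UNIV" using ab by simp
next
  fix ab :: "'a \<times> 'a" assume "ab \<in> UNIV - {(0, 0)} - (Fp - {0}) \<times> UNIV"
  then show "ab \<in> {(a, b). real (wt a b) = w1}" using wt_eq_w1 by auto
qed

lemma card_pairs_wt_w1: "card {(a, b). real (wt a b) = w1} = p ^ (2 * m) - 1 - (p - 1) * p ^ m"
proof -
  have "card (UNIV :: ('a \<times> 'a) set) = p ^ (2 * m)"
    using card_field
    by (simp add: UNIV_Times_UNIV[symmetric] card_cartesian_product mult_2 power_add del: UNIV_Times_UNIV)
  moreover have "(Fp - {0}) \<times> (UNIV :: 'a set) \<subseteq> UNIV - {(0, 0)}" by auto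
  moreover have "card ((Fp - {0}) \<times> (UNIV :: 'a set)) = (p - 1) * p ^ m"
    using card_Fp card_field by (simp add: card_cartesian_product)
  ultimately show ?thesis unfolding pairs_wt_w1 by (simp add: card_Diff_subset)
qed

lemma cw_add:
  "(\<lambda>d. cw p m u a b d + cw p m u a' b' d) = (cw p m u (a + a') (b + b') :: 'a \<times> 'a \<Rightarrow> 'a)"
proof
  fix d :: "'a \<times> 'a"
  have "(a + a') * fst d + (b + b') * snd d = (a * fst d + b * snd d) + (a' * fst d + b' * snd d)"
    by algebra
  then show "cw p m u a b d + cw p m u a' b' d = cw p m u (a + a') (b + b') d"
    by (simp add: cw_def case_prod_beta tr_add)
qed

lemma cw_diff:
  "(\<lambda>d. cw p m u a b d - cw p m u a' b' d) = (cw p m u (a - a') (b - b') :: 'a \<times> 'a \<Rightarrow> 'a)"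
proof
  fix d :: "'a \<times> 'a"
  have "(a - a') * fst d + (b - b') * snd d = (a * fst d + b * snd d) - (a' * fst d + b' * snd d)"
    by algebra
  then show "cw p m u a b d - cw p m u a' b' d = cw p m u (a - a') (b - b') d"
    by (simp add: cw_def case_prod_beta tr_diff)
qed

lemma cw_of_nat_mult:
  "(\<lambda>d. of_nat k * cw p m u a b d) = (cw p m u (of_nat k * a) (of_nat k * b) :: 'a \<times> 'a \<Rightarrow> 'a)"
proof
  fix d :: "'a \<times> 'a"
  have "of_nat k * a * fst d + of_nat k * b * snd d = (of_nat k :: 'a) * (a * fst d + b * snd d)"
    by algebra
  moreover have "(of_nat k :: 'a) \<in> Fp" by (simp add: Fp_eq_range_of_nat)
  ultimately show "of_nat k * cw p m u a b d = cw p m u (of_nat k * a) (of_nat k * b) d"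
    by (simp add: cw_def case_prod_beta tr_mult_Fp)
qed

lemma cw_0_0: "(cw p m u 0 0 :: 'a \<times> 'a \<Rightarrow> 'a) = (\<lambda>_. 0)"
  by (auto simp: cw_def)

lemma cw_eq_0_iff: "(cw p m u a b :: 'a \<times> 'a \<Rightarrow> 'a) = (\<lambda>_. 0) \<longleftrightarrow> (a, b) = (0, 0)"
proof
  assume "cw p m u a b = (\<lambda>_. 0)"
  then have "wt a b = 0" by (simp add: hw_def)
  then show "(a, b) = (0, 0)" using wt_pos[of a b] by (cases "(a, b) = (0, 0)") auto
qed (simp add: cw_0_0)

lemma inj_cw: "inj (\<lambda>(a, b). cw p m u a b :: 'a \<times> 'a \<Rightarrow> 'a)"
proof (rule injI, clarify)
  fix a b a' b' :: 'a
  assume eq: "cw p m u a b = (cw p m u a' b' :: 'a \<times> 'a \<Rightarrow> 'a)"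
  have "cw p m u (a - a') (b - b') = (\<lambda>d. cw p m u a b d - cw p m u a' b' d :: 'a)"
    by (rule cw_diff[symmetric])
  also have "\<dots> = (\<lambda>_. 0)" using eq by simp
  finally show "a = a' \<and> b = b'" by (simp add: cw_eq_0_iff)
qed

lemma code_eq_image: "code p m u = (\<lambda>(a, b). cw p m u a b :: 'a \<times> 'a \<Rightarrow> 'a) ` UNIV"
  by (auto simp: code_def)

lemma card_code: "card (code p m u :: ('a \<times> 'a \<Rightarrow> 'a) set) = p ^ (2 * m)"
  using inj_cw card_field
  by (simp add: code_eq_image card_image UNIV_Times_UNIV[symmetric] card_cartesian_product mult_2 power_add
      del: UNIV_Times_UNIV)

lemma card_code_wt:
  "card {c \<in> (code p m u :: ('a \<times> 'a \<Rightarrow> 'a) set). R (hw p m u c)} = card {(a, b). R (wt a b)}"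
proof -
  have "{c \<in> code p m u. R (hw p m u c)} = (\<lambda>(a, b). cw p m u a b :: 'a \<times> 'a \<Rightarrow> 'a) ` {(a, b). R (wt a b)}"
    by (auto simp: code_eq_image)
  then show ?thesis using inj_cw by (simp add: card_image inj_on_subset[OF _ subset_UNIV])
qed

lemma nonzero_weights_eq:
  "{hw p m u c | c. c \<in> (code p m u :: ('a \<times> 'a \<Rightarrow> 'a) set) \<and> c \<noteq> (\<lambda>_. 0)}
    = (\<lambda>(a, b). wt a b) ` (UNIV - {(0, 0)})"
proof (intro equalityI subsetI)
  fix n assume "n \<in> {hw p m u c | c. c \<in> (code p m u :: ('a \<times> 'a \<Rightarrow> 'a) set) \<and> c \<noteq> (\<lambda>_. 0)}"
  then obtain a b where "n = wt a b" "cw p m u a b \<noteq> (\<lambda>_. 0 :: 'a)" by (auto simp: code_eq_image)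
  then show "n \<in> (\<lambda>(a, b). wt a b) ` (UNIV - {(0, 0)})" by (auto simp: cw_eq_0_iff)
next
  fix n assume "n \<in> (\<lambda>(a, b). wt a b) ` (UNIV - {(0, 0)})"
  then obtain a b where "n = wt a b" "(a, b) \<noteq> (0, 0)" by auto
  then show "n \<in> {hw p m u c | c. c \<in> (code p m u :: ('a \<times> 'a \<Rightarrow> 'a) set) \<and> c \<noteq> (\<lambda>_. 0)}"
    by (intro CollectI exI[of _ "cw p m u a b"]) (auto simp: code_def cw_eq_0_iff)
qed

lemma ex_Q_1_nonzero: "\<exists>w. Q 1 w \<noteq> 0"
proof -
  have "NQ 1 0 \<le> p ^ (m - 1)" using NQ_0_eq[of 1] by simp
  also have "\<dots> < p ^ m" using p_gt_1 m_pos by simp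
  finally have "{w::'a. Q 1 w = 0} \<noteq> UNIV" using card_field by (auto simp: NQ_def)
  then show ?thesis by auto
qed

lemma real_nonzero_weights:
  "real ` (\<lambda>(a, b). wt a b) ` (UNIV - {(0, 0)}) = {w1, w2, w3}"
proof (intro equalityI subsetI)
  fix r assume "r \<in> real ` (\<lambda>(a, b). wt a b) ` (UNIV - {(0, 0)})"
  then obtain a b where "(a, b) \<noteq> (0, 0)" "r = real (wt a b)" by auto
  then show "r \<in> {w1, w2, w3}"
  proof (cases "a \<in> Fp - {0}")
    case True
    then obtain w where "b = L a w" using bij_L by (metis DiffE insertI1 bij_pointE)
    then show ?thesis using True wt_L[of a w] \<open>r = real (wt a b)\<close> by simp
  qed (use wt_eq_w1 in auto)
next
  obtain w :: 'a where "Q 1 w \<noteq> 0" using ex_Q_1_nonzero by blast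
  then have "w1 = real (wt 0 1)" "w2 = real (wt 1 (L 1 0))" "w3 = real (wt 1 (L 1 w))"
    using wt_eq_w1[of 0 1] wt_L[of 1 0] wt_L[of 1 w] by simp_all
  then show "r \<in> real ` (\<lambda>(a, b). wt a b) ` (UNIV - {(0, 0)})" if "r \<in> {w1, w2, w3}" for r
    using that by (force intro: rev_image_eqI)
qed

lemma card_nonzero_weights:
  "card {hw p m u c | c. c \<in> (code p m u :: ('a \<times> 'a \<Rightarrow> 'a) set) \<and> c \<noteq> (\<lambda>_. 0)} = 3"
proof -
  have "card (real ` (\<lambda>(a, b). wt a b) ` (UNIV - {(0 :: 'a, 0 :: 'a)})) = 3"
    using real_nonzero_weights w_distinct by simp
  then show ?thesis unfolding nonzero_weights_eq by (simp add: card_image)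
qed

lemma code_entries_in_range_of_nat:
  "c \<in> (code p m u :: ('a \<times> 'a \<Rightarrow> 'a) set) \<Longrightarrow> c d \<in> range (of_nat :: nat \<Rightarrow> 'a)"
  using tr_in_Fp rangeI[of "of_nat :: nat \<Rightarrow> 'a" 0]
  by (auto simp: code_def cw_def Fp_eq_range_of_nat split: prod.split)

lemma code_add_closed:
  "c1 \<in> (code p m u :: ('a \<times> 'a \<Rightarrow> 'a) set) \<Longrightarrow> c2 \<in> code p m u \<Longrightarrow>
    (\<lambda>d. c1 d + c2 d) \<in> code p m u"
  by (clarsimp simp: code_def cw_add) blast

lemma code_of_nat_mult_closed:
  "c \<in> (code p m u :: ('a \<times> 'a \<Rightarrow> 'a) set) \<Longrightarrow> (\<lambda>d. of_nat k * c d) \<in> code p m u"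
  by (clarsimp simp: code_def cw_of_nat_mult) blast

lemma card_code_wt_0: "card {c \<in> (code p m u :: ('a \<times> 'a \<Rightarrow> 'a) set). hw p m u c = 0} = 1"
proof -
  have "{(a, b). wt a b = 0} = {(0 :: 'a, 0 :: 'a)}"
  proof (intro equalityI subsetI)
    fix ab :: "'a \<times> 'a" assume "ab \<in> {(a, b). wt a b = 0}"
    then show "ab \<in> {(0, 0)}" using wt_pos[of "fst ab" "snd ab"] by (cases ab) auto
  qed (simp add: wt_0_0)
  then show ?thesis using card_code_wt[of "\<lambda>n. n = 0"] by simp
qed

lemma card_code_wt_w1:
  "card {c \<in> (code p m u :: ('a \<times> 'a \<Rightarrow> 'a) set). real (hw p m u c) = w1}
    = p ^ (2 * m) - 1 - (p - 1) * p ^ m"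
  using card_code_wt[of "\<lambda>n. real n = w1"] card_pairs_wt_w1 by simp

lemma card_code_wt_w2:
  "real (card {c \<in> (code p m u :: ('a \<times> 'a \<Rightarrow> 'a) set). real (hw p m u c) = w2})
    = (real p - 1) * (real p ^ (m - 1) - real p ^ s + real p ^ (s - 1))"
  using card_code_wt[of "\<lambda>n. real n = w2"] card_pairs_wt_w2 by (simp add: real_p_power_s algebra_simps)

lemma card_code_wt_w3:
  "real (card {c \<in> (code p m u :: ('a \<times> 'a \<Rightarrow> 'a) set). real (hw p m u c) = w3})
    = (real p - 1) * (real p ^ s + 1) * (real p ^ s - real p ^ (s - 1))"
proof -
  have "real (card {c \<in> (code p m u :: ('a \<times> 'a \<Rightarrow> 'a) set). real (hw p m u c) = w3})
      = (real p - 1) * (real p * P1 - P1 + (real p - 1) * S1)"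
    using card_code_wt[of "\<lambda>n. real n = w3"] card_pairs_wt_w3 by simp
  also have "\<dots> = (real p - 1) * (real p ^ s + 1) * (real p ^ s - S1)"
    unfolding real_p_power_s P1_eq by (simp add: power2_eq_square algebra_simps)
  finally show ?thesis .
qed

end

theorem theorem3:
  fixes p m u s :: nat
  assumes "prime p" and "odd p" and "m > 0" and "even m" and "s = m div 2"
    and "card (UNIV :: 'a::{finite,field} set) = p ^ m"
    and "u > 0"
    and "(m div gcd m u) mod 4 = 2"
  defines "C \<equiv> (code p m u :: ('a \<times> 'a \<Rightarrow> 'a) set)"
  shows
    "(\<forall>c\<in>C. \<forall>d\<in>D1 p m u. c d \<in> range (of_nat :: nat \<Rightarrow> 'a))
     \<and> (\<forall>c1\<in>C. \<forall>c2\<in>C. (\<lambda>d. c1 d + c2 d) \<in> C)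
     \<and> (\<forall>c\<in>C. \<forall>k::nat. (\<lambda>d. of_nat k * c d) \<in> C)
     \<and> card (D1 p m u :: ('a \<times> 'a) set) = p ^ (2*m - 1) - 1
     \<and> card C = p ^ (2*m)
     \<and> card {hw p m u c | c. c \<in> C \<and> c \<noteq> (\<lambda>_. 0)} = 3
     \<and> card {c \<in> C. hw p m u c = 0} = 1
     \<and> card {c \<in> C. real (hw p m u c) = (real p - 1) * real p ^ (2*m - 2)}
         = p ^ (2*m) - 1 - (p - 1) * p ^ m
     \<and> real (card {c \<in> C. real (hw p m u c) = (real p - 1) * real p ^ (2*m - 2) * (1 + 1 / real p ^ s)})
         = (real p - 1) * (real p ^ (m - 1) - real p ^ s + real p ^ (s - 1))
     \<and> real (card {c \<in> C. real (hw p m u c)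
                     = (real p - 1) * real p ^ (2*m - 2) * (1 - 1 / ((real p - 1) * real p ^ s))})
         = (real p - 1) * (real p ^ s + 1) * (real p ^ s - real p ^ (s - 1))"
proof -
  interpret D1_code p m "TYPE('a)" u
    by unfold_locales (use assms in auto)
  show ?thesis
    unfolding C_def assms(5)
    by (intro conjI ballI allI code_entries_in_range_of_nat code_add_closed code_of_nat_mult_closed
        card_D1 card_code card_nonzero_weights card_code_wt_0 card_code_wt_w1[unfolded w1_def]
        card_code_wt_w2[unfolded w2_def] card_code_wt_w3[unfolded w3_def]) auto
qed

end
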